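(* Let $H_n$ be the normal closure in $VB_n$ of the subgroup generated by $\sigma_1,\dots,\sigma_{n-1}$. Then $H_n$ is generated by the elements $x_{k,l}$, $1\le k\neq l\le n$, and admits the presentation with these generators and defining relations $$x_{i,j}x_{k,l}=x_{k,l}x_{i,j}\quad(i,j,k,l\text{ pairwise distinct}),$$ $$x_{i,k}x_{k,j}x_{i,k}=x_{k,j}x_{i,k}x_{k,j}\quad(i,j,k\text{ pairwise distinct}).$$
   Context: The virtual braid group $VB_n$ is the group with generators $\sigma_i,\rho_i$ ($i=1,\dots,n-1$) and defining relations: $\sigma_i\sigma_{i+1}\sigma_i=\sigma_{i+1}\sigma_i\sigma_{i+1}$ ($1\le i\le n-2$); $\sigma_i\sigma_j=\sigma_j\sigma_i$ ($|i-j|\geq 2$); $\rho_i\rho_{i+1}\rho_i=\rho_{i+1}\rho_i\rho_{i+1}$ ($1\le i\le n-2$); $\rho_i\rho_j=\rho_j\rho_i$ ($|i-j|\geq 2$); $\rho_i^2=1$; $\sigma_i\rho_j=\rho_j\sigma_i$ ($|i-j|\geq2$); $\rho_i\rho_{i+1}\sigma_i=\sigma_{i+1}\rho_i\rho_{i+1}$ ($1\le i\le n-2$). $H_n$ equals the kernel of the homomorphism $\mu:VB_n\to S_n$, $\mu(\sigma_i)=1$, $\mu(\rho_i)=(i\ i{+}1)$. Elements of $VB_n$: $x_{i,i+1}=\sigma_i$; $x_{i,j}=\rho_{j-1}\cdots\rho_{i+1}\sigma_i\rho_{i+1}\cdots\rho_{j-1}$ for $1\le i<j-1\le n-1$; $x_{i+1,i}=\rho_i\sigma_i\rho_i$;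 $x_{j,i}=\rho_{j-1}\cdots\rho_{i+1}\rho_i\sigma_i\rho_i\rho_{i+1}\cdots\rho_{j-1}$ for $1\le i<j-1\le n-1$. *)

theory Defs
  imports "HOL-Algebra.Algebra"
begin

text \<open>A letter is a generator together with a flag; (g, False) stands for g and
  (g, True) for its inverse.  Words are lists of letters.\<close>

type_synonym 'g word = "('g \<times> bool) list"

definition inv_word :: "'g word \<Rightarrow> 'g word" where
  "inv_word w = rev (map (\<lambda>(g, b). (g, \<not> b)) w)"

inductive pres_eq :: "'g set \<Rightarrow> ('g word \<times> 'g word) set \<Rightarrow> 'g word \<Rightarrow> 'g word \<Rightarrow> bool"
  for S R where
  refl: "pres_eq S R w w"
| sym: "pres_eq S R u v \<Longrightarrow> pres_eq S R v u"
| trans: "pres_eq S R u v \<Longrightarrow> pres_eq S R v w \<Longrightarrow> pres_eq S R u w"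
| cancel: "g \<in> S \<Longrightarrow> pres_eq S R [(g, b), (g, \<not> b)] []"
| rel: "(l, r) \<in> R \<Longrightarrow> pres_eq S R l r"
| congr: "pres_eq S R u u' \<Longrightarrow> pres_eq S R v v' \<Longrightarrow> pres_eq S R (u @ v) (u' @ v')"

definition words :: "'g set \<Rightarrow> 'g word set" where
  "words S = {w. set (map fst w) \<subseteq> S}"

definition pres_rel :: "'g set \<Rightarrow> ('g word \<times> 'g word) set \<Rightarrow> ('g word \<times> 'g word) set" where
  "pres_rel S R = {(u, v). u \<in> words S \<and> v \<in> words S \<and> pres_eq S R u v}"

text \<open>The group with generators S and defining relations R (all relators are assumed to be
  words over S).  Elements are equivalence classes of words.\<close>

definition presented_group :: "'g set \<Rightarrow> ('g word \<times> 'g word) set \<Rightarrow> 'g word set monoid" where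
  "presented_group S R =
     \<lparr> carrier = words S // pres_rel S R,
       monoid.mult = (\<lambda>A B. pres_rel S R `` {(SOME u. u \<in> A) @ (SOME v. v \<in> B)}),
       one = pres_rel S R `` {[]} \<rparr>"

definition gen_elem :: "'g set \<Rightarrow> ('g word \<times> 'g word) set \<Rightarrow> 'g \<Rightarrow> 'g word set" where
  "gen_elem S R g = pres_rel S R `` {[(g, False)]}"

definition normal_closure :: "('a, 'b) monoid_scheme \<Rightarrow> 'a set \<Rightarrow> 'a set" where
  "normal_closure G A = \<Inter> {N. N \<lhd> G \<and> A \<subseteq> N}"

datatype vb_gen = Sig nat | Rho nat

definition vb_gens :: "nat \<Rightarrow> vb_gen set" where
  "vb_gens n = {Sig i | i. 1 \<le> i \<and> i \<le> n - 1} \<union> {Rho i | i. 1 \<le> i \<and> i \<le> n - 1}"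

definition g :: "vb_gen \<Rightarrow> vb_gen word" where
  "g a = [(a, False)]"

definition vb_rels :: "nat \<Rightarrow> (vb_gen word \<times> vb_gen word) set" where
  "vb_rels n =
     {(g (Sig i) @ g (Sig (i+1)) @ g (Sig i), g (Sig (i+1)) @ g (Sig i) @ g (Sig (i+1))) | i. 1 \<le> i \<and> i \<le> n - 2}
   \<union> {(g (Sig i) @ g (Sig j), g (Sig j) @ g (Sig i)) | i j.
        1 \<le> i \<and> i \<le> n - 1 \<and> 1 \<le> j \<and> j \<le> n - 1 \<and> (i \<ge> j + 2 \<or> j \<ge> i + 2)}
   \<union> {(g (Rho i) @ g (Rho (i+1)) @ g (Rho i), g (Rho (i+1)) @ g (Rho i) @ g (Rho (i+1))) | i. 1 \<le> i \<and> i \<le> n - 2}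
   \<union> {(g (Rho i) @ g (Rho j), g (Rho j) @ g (Rho i)) | i j.
        1 \<le> i \<and> i \<le> n - 1 \<and> 1 \<le> j \<and> j \<le> n - 1 \<and> (i \<ge> j + 2 \<or> j \<ge> i + 2)}
   \<union> {(g (Rho i) @ g (Rho i), []) | i. 1 \<le> i \<and> i \<le> n - 1}
   \<union> {(g (Sig i) @ g (Rho j), g (Rho j) @ g (Sig i)) | i j.
        1 \<le> i \<and> i \<le> n - 1 \<and> 1 \<le> j \<and> j \<le> n - 1 \<and> (i \<ge> j + 2 \<or> j \<ge> i + 2)}
   \<union> {(g (Rho i) @ g (Rho (i+1)) @ g (Sig i), g (Sig (i+1)) @ g (Rho i) @ g (Rho (i+1))) | i. 1 \<le> i \<and> i \<le> n - 2}"

definition VB :: "nat \<Rightarrow> vb_gen word set monoid" where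
  "VB n = presented_group (vb_gens n) (vb_rels n)"

definition vb_elem :: "nat \<Rightarrow> vb_gen word \<Rightarrow> vb_gen word set" where
  "vb_elem n w = pres_rel (vb_gens n) (vb_rels n) `` {w}"

definition x_word :: "nat \<Rightarrow> nat \<Rightarrow> vb_gen word" where
  "x_word k l =
     (if k < l then
        map (\<lambda>m. (Rho m, False)) (rev [k+1..<l]) @ g (Sig k) @ map (\<lambda>m. (Rho m, False)) [k+1..<l]
      else
        map (\<lambda>m. (Rho m, False)) (rev [l..<k]) @ g (Sig l) @ map (\<lambda>m. (Rho m, False)) [l..<k])"

definition x_elem :: "nat \<Rightarrow> nat \<Rightarrow> nat \<Rightarrow> vb_gen word set" where
  "x_elem n k l = vb_elem n (x_word k l)"

definition H :: "nat \<Rightarrow> vb_gen word set set" where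
  "H n = normal_closure (VB n) {vb_elem n (g (Sig i)) | i. 1 \<le> i \<and> i \<le> n - 1}"

definition x_gens :: "nat \<Rightarrow> (nat \<times> nat) set" where
  "x_gens n = {(k, l). 1 \<le> k \<and> k \<le> n \<and> 1 \<le> l \<and> l \<le> n \<and> k \<noteq> l}"

definition xg :: "nat \<Rightarrow> nat \<Rightarrow> (nat \<times> nat) word" where
  "xg k l = [((k, l), False)]"

definition x_rels :: "nat \<Rightarrow> ((nat \<times> nat) word \<times> (nat \<times> nat) word) set" where
  "x_rels n =
     {(xg i j @ xg k l, xg k l @ xg i j) | i j k l.
        (i, j) \<in> x_gens n \<and> (k, l) \<in> x_gens n \<and> distinct [i, j, k, l]}
   \<union> {(xg i k @ xg k j @ xg i k, xg k j @ xg i k @ xg k j) | i j k.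
        (i, k) \<in> x_gens n \<and> (k, j) \<in> x_gens n \<and> distinct [i, j, k]}"

definition P :: "nat \<Rightarrow> (nat \<times> nat) word set monoid" where
  "P n = presented_group (x_gens n) (x_rels n)"

end

(* Conjugation by rho_m permutes the generators: rho_m x_(k,l) rho_m = x_(s k, s l) for the
   transposition s = (m m+1).  Hence the subgroup generated by the x_(k,l) is normal; it contains the
   sigma_i = x_(i,i+1) and lies in every normal subgroup containing them, so it is H_n.  Transporting
   sigma_1 sigma_3 = sigma_3 sigma_1 and the braid relation of sigma_1, sigma_2 along these
   conjugations shows that the defining relations of P_n hold among the x_(k,l); this gives an
   epimorphism from P_n onto H_n.  It is injective: sigma_i |-> (x_(i,i+1), id) and
   rho_i |-> (1, (i i+1)) define a homomorphism from VB_n to the semidirect product of P_n by S_n,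
   where S_n permutes the indices of the generators, and its composite with the epimorphism is
   p |-> (p, id). *)

theory Submission
  imports Defs
begin

section \<open>Evaluating words and presented groups\<close>

definition eval_word :: "('b, 'c) monoid_scheme \<Rightarrow> ('a \<Rightarrow> 'b) \<Rightarrow> 'a word \<Rightarrow> 'b" where
  "eval_word G f w =
     foldr (\<lambda>x y. (if snd x then inv\<^bsub>G\<^esub> (f (fst x)) else f (fst x)) \<otimes>\<^bsub>G\<^esub> y) w \<one>\<^bsub>G\<^esub>"

lemma eval_word_Nil [simp]: "eval_word G f [] = \<one>\<^bsub>G\<^esub>"
  by (simp add: eval_word_def)

lemma eval_word_Cons [simp]:
  "eval_word G f (x # w) = (if snd x then inv\<^bsub>G\<^esub> (f (fst x)) else f (fst x)) \<otimes>\<^bsub>G\<^esub> eval_word G f w"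
  by (simp add: eval_word_def)

lemma eval_word_map: "eval_word G f (map (apfst h) w) = eval_word G (f \<circ> h) w"
  by (induction w) auto

lemma words_Nil [simp]: "[] \<in> words S"
  and words_Cons [simp]: "x # w \<in> words S \<longleftrightarrow> fst x \<in> S \<and> w \<in> words S"
  and words_append [simp]: "u @ v \<in> words S \<longleftrightarrow> u \<in> words S \<and> v \<in> words S"
  by (auto simp: words_def)

lemma words_map: "w \<in> words S \<Longrightarrow> h \<in> S \<rightarrow> T \<Longrightarrow> map (apfst h) w \<in> words T"
  by (induction w) auto

lemma inv_word_Nil [simp]: "inv_word [] = []"
  and inv_word_Cons [simp]: "inv_word (x # w) = inv_word w @ [(fst x, \<not> snd x)]"
  by (auto simp: inv_word_def split: prod.split)

lemma inv_word_in_words [simp]: "inv_word w \<in> words S \<longleftrightarrow> w \<in> words S"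
  by (induction w) auto

lemma (in group) eval_word_closed:
  "f \<in> S \<rightarrow> carrier G \<Longrightarrow> w \<in> words S \<Longrightarrow> eval_word G f w \<in> carrier G"
  by (induction w) auto

lemma (in group) eval_word_append:
  assumes "f \<in> S \<rightarrow> carrier G" "u \<in> words S" "v \<in> words S"
  shows "eval_word G f (u @ v) = eval_word G f u \<otimes> eval_word G f v"
  using assms(2)
proof (induction u)
  case (Cons x u)
  then have "f (fst x) \<in> carrier G" "eval_word G f u \<in> carrier G" "eval_word G f v \<in> carrier G"
    using assms by (auto intro: eval_word_closed)
  with Cons show ?case
    by (simp add: m_assoc)
qed (use eval_word_closed[OF assms(1,3)] in simp)

definition induced_map :: "('b, 'c) monoid_scheme \<Rightarrow> ('a \<Rightarrow> 'b) \<Rightarrow> 'a word set \<Rightarrow> 'b" where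
  "induced_map G f A = eval_word G f (SOME w. w \<in> A)"

locale group_presentation =
  fixes S :: "'g set" and R :: "('g word \<times> 'g word) set"
  assumes relators_in_words: "R \<subseteq> words S \<times> words S"
begin

abbreviation PG :: "'g word set monoid" where
  "PG \<equiv> presented_group S R"

abbreviation word_class :: "'g word \<Rightarrow> 'g word set" where
  "word_class w \<equiv> pres_rel S R `` {w}"

lemma pres_eq_words_iff: "pres_eq S R u v \<Longrightarrow> u \<in> words S \<longleftrightarrow> v \<in> words S"
  by (induction rule: pres_eq.induct) (use relators_in_words in auto)

lemma in_pres_rel [simp]: "(u, v) \<in> pres_rel S R \<longleftrightarrow> u \<in> words S \<and> v \<in> words S \<and> pres_eq S R u v"
  by (simp add: pres_rel_def)

lemma mem_word_class: "v \<in> word_class u \<longleftrightarrow> u \<in> words S \<and> v \<in> words S \<and> pres_eq S R u v"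
  by (simp add: pres_rel_def)

lemma word_class_eq_iff:
  assumes "u \<in> words S" "v \<in> words S"
  shows "word_class u = word_class v \<longleftrightarrow> pres_eq S R u v"
proof
  assume "word_class u = word_class v"
  then show "pres_eq S R u v"
    using assms mem_word_class pres_eq.refl by blast
next
  assume "pres_eq S R u v"
  then show "word_class u = word_class v"
    using assms by (auto simp: mem_word_class) (meson pres_eq.sym pres_eq.trans)+
qed

lemma word_class_eqI: "pres_eq S R u v \<Longrightarrow> u \<in> words S \<Longrightarrow> word_class u = word_class v"
  using word_class_eq_iff pres_eq_words_iff by blast

lemma carrier_presented_group: "carrier PG = word_class ` words S"
  by (auto simp: presented_group_def quotient_def)

lemma word_class_in_carrier: "u \<in> words S \<Longrightarrow> word_class u \<in> carrier PG"
  by (simp add: carrier_presented_group)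

lemma one_presented_group: "\<one>\<^bsub>PG\<^esub> = word_class []"
  by (simp add: presented_group_def)

lemma mult_word_class:
  assumes u: "u \<in> words S" and v: "v \<in> words S"
  shows "word_class u \<otimes>\<^bsub>PG\<^esub> word_class v = word_class (u @ v)"
proof -
  have some_in: "(SOME x. x \<in> word_class w) \<in> word_class w" if "w \<in> words S" for w
    by (rule someI[of _ w]) (simp add: that mem_word_class pres_eq.refl)
  define u' where "u' = (SOME x. x \<in> word_class u)"
  define v' where "v' = (SOME x. x \<in> word_class v)"
  have "u' \<in> words S" "pres_eq S R u u'" "v' \<in> words S" "pres_eq S R v v'"
    using some_in[OF u] some_in[OF v] by (auto simp: u'_def v'_def mem_word_class)
  then have "word_class (u' @ v') = word_class (u @ v)"
    using u v by (subst word_class_eq_iff) (auto intro: pres_eq.sym pres_eq.congr)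
  then show ?thesis
    by (simp add: presented_group_def u'_def v'_def)
qed

lemma relator_word_class_eq: "(l, r) \<in> R \<Longrightarrow> word_class l = word_class r"
  using relators_in_words by (intro word_class_eqI pres_eq.rel) auto

lemma pres_eq_inv_word_append: "u \<in> words S \<Longrightarrow> pres_eq S R (inv_word u @ u) []"
proof (induction u)
  case Nil
  then show ?case by (simp add: pres_eq.refl)
next
  case (Cons x u)
  have "pres_eq S R (inv_word u @ [(fst x, \<not> snd x), x] @ u) (inv_word u @ [] @ u)"
    using Cons.prems pres_eq.cancel[of "fst x" S R "\<not> snd x"]
    by (intro pres_eq.congr pres_eq.refl) simp
  then show ?case
    using Cons by (auto intro: pres_eq.trans)
qed

lemma group_presented_group: "group PG"
proof (rule groupI)
  fix x
  assume "x \<in> carrier PG"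
  then obtain u where u: "u \<in> words S" "x = word_class u"
    by (auto simp: carrier_presented_group)
  then have "word_class (inv_word u) \<otimes>\<^bsub>PG\<^esub> x = \<one>\<^bsub>PG\<^esub>"
    using pres_eq_inv_word_append[OF u(1)]
    by (simp add: mult_word_class one_presented_group word_class_eq_iff)
  then show "\<exists>y\<in>carrier PG. y \<otimes>\<^bsub>PG\<^esub> x = \<one>\<^bsub>PG\<^esub>"
    using u by (metis inv_word_in_words word_class_in_carrier)
qed (auto simp: carrier_presented_group mult_word_class one_presented_group)

lemma gen_elem_in_carrier: "a \<in> S \<Longrightarrow> gen_elem S R a \<in> carrier PG"
  by (simp add: gen_elem_def word_class_in_carrier)

lemma inv_word_class_letter: "a \<in> S \<Longrightarrow> inv\<^bsub>PG\<^esub> (word_class [(a, False)]) = word_class [(a, True)]"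
  using pres_eq.cancel[of a S R True]
  by (intro group.inv_equality[OF group_presented_group])
     (simp_all add: mult_word_class one_presented_group word_class_eq_iff word_class_in_carrier)

lemma word_class_eq_eval_word: "w \<in> words S \<Longrightarrow> word_class w = eval_word PG (gen_elem S R) w"
proof (induction w)
  case Nil
  then show ?case by (simp add: one_presented_group)
next
  case (Cons x w)
  have "word_class (x # w) = word_class [x] \<otimes>\<^bsub>PG\<^esub> word_class w"
    using Cons.prems by (simp add: mult_word_class)
  moreover have
    "word_class [x] = (if snd x then inv\<^bsub>PG\<^esub> (gen_elem S R (fst x)) else gen_elem S R (fst x))"
    using Cons.prems by (cases x) (simp add: inv_word_class_letter gen_elem_def)
  ultimately show ?case
    using Cons by simp
qed

lemma carrier_presented_group_generate: "carrier PG = generate PG (gen_elem S R ` S)"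
proof -
  interpret group PG
    by (rule group_presented_group)
  have "eval_word PG (gen_elem S R) w \<in> generate PG (gen_elem S R ` S)" if "w \<in> words S" for w
    using that by (induction w) (auto intro: generate.one generate.incl generate.inv generate.eng)
  then show ?thesis
    using generate_incl[of "gen_elem S R ` S"] gen_elem_in_carrier
    by (auto simp: carrier_presented_group word_class_eq_eval_word)
qed

context
  fixes G :: "('b, 'c) monoid_scheme" and f :: "'g \<Rightarrow> 'b"
  assumes group_G: "group G"
    and f_carrier: "f \<in> S \<rightarrow> carrier G"
    and f_relators: "\<And>l r. (l, r) \<in> R \<Longrightarrow> eval_word G f l = eval_word G f r"
begin

interpretation G: group G
  by (rule group_G)

lemma eval_word_pres_eq: "pres_eq S R u v \<Longrightarrow> u \<in> words S \<Longrightarrow> eval_word G f u = eval_word G f v"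
proof (induction rule: pres_eq.induct)
  case (cancel a b)
  then show ?case
    using f_carrier by (cases b) (auto simp: Pi_iff)
next
  case (congr u u' v v')
  then show ?case
    using f_carrier pres_eq_words_iff by (simp add: G.eval_word_append)
qed (use f_relators pres_eq_words_iff in auto)

lemma induced_map_word_class: "w \<in> words S \<Longrightarrow> induced_map G f (word_class w) = eval_word G f w"
  unfolding induced_map_def
  by (rule someI2[of "\<lambda>x. x \<in> word_class w"])
     (auto simp: mem_word_class pres_eq.refl intro: eval_word_pres_eq[symmetric])

lemma induced_map_hom: "induced_map G f \<in> hom PG G"
  using f_carrier
  by (intro homI)
     (auto simp: carrier_presented_group induced_map_word_class mult_word_class
       G.eval_word_closed G.eval_word_append)

lemma induced_map_gen_elem: "a \<in> S \<Longrightarrow> induced_map G f (gen_elem S R a) = f a"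
  using f_carrier by (auto simp: gen_elem_def induced_map_word_class Pi_iff)

lemma induced_map_image: "induced_map G f ` carrier PG = generate G (f ` S)"
proof -
  have hom: "group_hom PG G (induced_map G f)"
    by (intro group_hom.intro group_hom_axioms.intro group_presented_group group_G induced_map_hom)
  have "induced_map G f ` gen_elem S R ` S = f ` S"
    by (force simp: induced_map_gen_elem)
  moreover have "generate G (induced_map G f ` gen_elem S R ` S) =
      induced_map G f ` generate PG (gen_elem S R ` S)"
    by (rule group_hom.generate_img[OF hom]) (auto simp: gen_elem_in_carrier)
  ultimately show ?thesis
    by (simp add: carrier_presented_group_generate[symmetric])
qed

end

lemma hom_eq_on_generators:
  assumes "group G" "h \<in> hom PG G" "h' \<in> hom PG G"
    and "\<And>a. a \<in> S \<Longrightarrow> h (gen_elem S R a) = h' (gen_elem S R a)"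
    and "x \<in> carrier PG"
  shows "h x = h' x"
proof -
  interpret PG: group PG
    by (rule group_presented_group)
  have hom: "group_hom PG G h" "group_hom PG G h'"
    using assms by (auto intro: group_hom.intro group_hom_axioms.intro group_presented_group)
  have "h (eval_word PG (gen_elem S R) w) = h' (eval_word PG (gen_elem S R) w)"
    if "w \<in> words S" for w
    using that
  proof (induction w)
    case (Cons x w)
    then have "gen_elem S R (fst x) \<in> carrier PG" "eval_word PG (gen_elem S R) w \<in> carrier PG"
      using PG.eval_word_closed[of "gen_elem S R" S] by (auto simp: gen_elem_in_carrier)
    with Cons show ?case
      using assms(4) by (simp add: group_hom.hom_inv[OF hom(1)] group_hom.hom_inv[OF hom(2)]
          hom_mult[OF assms(2)] hom_mult[OF assms(3)])
  qed (use hom in \<open>simp add: group_hom.hom_one\<close>)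
  then show ?thesis
    using assms(5) by (auto simp: carrier_presented_group word_class_eq_eval_word)
qed

definition relabel :: "('g \<Rightarrow> 'g) \<Rightarrow> 'g word set \<Rightarrow> 'g word set" where
  "relabel h = induced_map PG (gen_elem S R \<circ> h)"

context
  fixes h :: "'g \<Rightarrow> 'g"
  assumes h_gens: "h \<in> S \<rightarrow> S"
    and h_relators: "\<And>l r. (l, r) \<in> R \<Longrightarrow> (map (apfst h) l, map (apfst h) r) \<in> R"
begin

lemma eval_word_relabel:
  "w \<in> words S \<Longrightarrow> eval_word PG (gen_elem S R \<circ> h) w = word_class (map (apfst h) w)"
  using h_gens by (simp add: word_class_eq_eval_word words_map eval_word_map)

lemma relabel_word_class: "w \<in> words S \<Longrightarrow> relabel h (word_class w) = word_class (map (apfst h) w)"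
and relabel_hom: "relabel h \<in> hom PG PG"
proof -
  have carrier: "gen_elem S R \<circ> h \<in> S \<rightarrow> carrier PG"
    using h_gens by (auto intro!: gen_elem_in_carrier)
  have relators: "eval_word PG (gen_elem S R \<circ> h) l = eval_word PG (gen_elem S R \<circ> h) r"
    if "(l, r) \<in> R" for l r
    using that relators_in_words h_relators[OF that]
    by (auto simp: eval_word_relabel relator_word_class_eq)
  show "w \<in> words S \<Longrightarrow> relabel h (word_class w) = word_class (map (apfst h) w)"
    unfolding relabel_def
    by (simp add: induced_map_word_class[OF group_presented_group carrier relators]
        eval_word_relabel)
  show "relabel h \<in> hom PG PG"
    unfolding relabel_def by (rule induced_map_hom[OF group_presented_group carrier relators])
qed

end

end

section \<open>Semidirect products and normality of generated subgroups\<close>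

definition semidirect_product ::
  "('a, 'c) monoid_scheme \<Rightarrow> ('b, 'd) monoid_scheme \<Rightarrow> ('b \<Rightarrow> 'a \<Rightarrow> 'a) \<Rightarrow> ('a \<times> 'b) monoid" where
  "semidirect_product N Q \<alpha> =
     \<lparr>carrier = carrier N \<times> carrier Q,
      monoid.mult = (\<lambda>(x, p) (y, q). (x \<otimes>\<^bsub>N\<^esub> \<alpha> p y, p \<otimes>\<^bsub>Q\<^esub> q)),
      one = (\<one>\<^bsub>N\<^esub>, \<one>\<^bsub>Q\<^esub>)\<rparr>"

lemma carrier_semidirect_product [simp]:
  "carrier (semidirect_product N Q \<alpha>) = carrier N \<times> carrier Q"
  and mult_semidirect_product [simp]:
  "(x, p) \<otimes>\<^bsub>semidirect_product N Q \<alpha>\<^esub> (y, q) = (x \<otimes>\<^bsub>N\<^esub> \<alpha> p y, p \<otimes>\<^bsub>Q\<^esub> q)"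
  and one_semidirect_product [simp]:
  "\<one>\<^bsub>semidirect_product N Q \<alpha>\<^esub> = (\<one>\<^bsub>N\<^esub>, \<one>\<^bsub>Q\<^esub>)"
  by (simp_all add: semidirect_product_def)

lemma group_semidirect_product:
  assumes "group N" "group Q"
    and action_hom: "\<And>q. q \<in> carrier Q \<Longrightarrow> \<alpha> q \<in> hom N N"
    and action_mult: "\<And>p q x. p \<in> carrier Q \<Longrightarrow> q \<in> carrier Q \<Longrightarrow> x \<in> carrier N \<Longrightarrow>
      \<alpha> (p \<otimes>\<^bsub>Q\<^esub> q) x = \<alpha> p (\<alpha> q x)"
    and action_one: "\<And>x. x \<in> carrier N \<Longrightarrow> \<alpha> \<one>\<^bsub>Q\<^esub> x = x"
  shows "group (semidirect_product N Q \<alpha>)"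
proof -
  interpret N: group N by fact
  interpret Q: group Q by fact
  have closed: "\<alpha> q x \<in> carrier N" if "q \<in> carrier Q" "x \<in> carrier N" for q x
    using action_hom[OF that(1)] that(2) by (rule hom_in_carrier)
  have mult: "\<alpha> q (x \<otimes>\<^bsub>N\<^esub> y) = \<alpha> q x \<otimes>\<^bsub>N\<^esub> \<alpha> q y"
    if "q \<in> carrier Q" "x \<in> carrier N" "y \<in> carrier N" for q x y
    using action_hom[OF that(1)] that(2,3) by (rule hom_mult)
  have one: "\<alpha> q \<one>\<^bsub>N\<^esub> = \<one>\<^bsub>N\<^esub>" if "q \<in> carrier Q" for q
    using action_hom[OF that]
    by (intro group_hom.hom_one group_hom.intro group_hom_axioms.intro) auto
  show ?thesis
  proof (rule groupI)
    fix u v w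
    assume "u \<in> carrier (semidirect_product N Q \<alpha>)" "v \<in> carrier (semidirect_product N Q \<alpha>)"
      "w \<in> carrier (semidirect_product N Q \<alpha>)"
    then show "u \<otimes>\<^bsub>semidirect_product N Q \<alpha>\<^esub> v \<otimes>\<^bsub>semidirect_product N Q \<alpha>\<^esub> w =
        u \<otimes>\<^bsub>semidirect_product N Q \<alpha>\<^esub> (v \<otimes>\<^bsub>semidirect_product N Q \<alpha>\<^esub> w)"
      by (auto simp: closed mult action_mult N.m_assoc Q.m_assoc)
  next
    fix u
    assume "u \<in> carrier (semidirect_product N Q \<alpha>)"
    then obtain x q where u: "u = (x, q)" "x \<in> carrier N" "q \<in> carrier Q"
      by auto
    have "\<alpha> (inv\<^bsub>Q\<^esub> q) (inv\<^bsub>N\<^esub> x) \<otimes>\<^bsub>N\<^esub> \<alpha> (inv\<^bsub>Q\<^esub> q) x = \<one>\<^bsub>N\<^esub>"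
      using u by (simp add: mult[symmetric] one)
    then show "\<exists>v\<in>carrier (semidirect_product N Q \<alpha>). v \<otimes>\<^bsub>semidirect_product N Q \<alpha>\<^esub> u =
        \<one>\<^bsub>semidirect_product N Q \<alpha>\<^esub>"
      using u by (intro bexI[of _ "(\<alpha> (inv\<^bsub>Q\<^esub> q) (inv\<^bsub>N\<^esub> x), inv\<^bsub>Q\<^esub> q)"]) (auto simp: closed)
  qed (auto simp: closed action_one)
qed

lemma (in group) conj_mem_generate:
  assumes B: "B \<subseteq> carrier G" and c: "c \<in> carrier G"
    and conj: "\<And>x. x \<in> B \<Longrightarrow> c \<otimes> x \<otimes> inv c \<in> generate G B"
    and "k \<in> generate G B"
  shows "c \<otimes> k \<otimes> inv c \<in> generate G B"
  using assms(4)
proof (induction rule: generate.induct)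
  case one
  then show ?case
    using c by (simp add: generate.one)
next
  case (incl x)
  then show ?case
    by (rule conj)
next
  case (inv x)
  then have "c \<otimes> inv x \<otimes> inv c = inv (c \<otimes> x \<otimes> inv c)"
    using B c by (simp add: subset_iff inv_mult_group m_assoc)
  then show ?case
    using generate_m_inv_closed[OF B conj[OF inv]] by simp
next
  case (eng h1 h2)
  then have "h1 \<in> carrier G" "h2 \<in> carrier G"
    using generate_in_carrier[OF B] by auto
  then have "c \<otimes> (h1 \<otimes> h2) \<otimes> inv c = (c \<otimes> h1 \<otimes> inv c) \<otimes> (c \<otimes> h2 \<otimes> inv c)"
    using c by (simp add: m_assoc) (simp add: m_assoc[symmetric])
  then show ?case
    using generate.eng[OF eng.IH] by simp
qed

lemma (in group) subgroup_conj_stable: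
  assumes K: "K \<subseteq> carrier G"
  shows "subgroup {c \<in> carrier G. \<forall>k\<in>K. c \<otimes> k \<otimes> inv c \<in> K \<and> inv c \<otimes> k \<otimes> c \<in> K} G"
    (is "subgroup ?N G")
proof (rule subgroupI)
  fix c h
  assume "c \<in> ?N" "h \<in> ?N"
  then have c: "c \<in> carrier G" "\<And>k. k \<in> K \<Longrightarrow> c \<otimes> k \<otimes> inv c \<in> K \<and> inv c \<otimes> k \<otimes> c \<in> K"
    and h: "h \<in> carrier G" "\<And>k. k \<in> K \<Longrightarrow> h \<otimes> k \<otimes> inv h \<in> K \<and> inv h \<otimes> k \<otimes> h \<in> K"
    by blast+
  have "c \<otimes> h \<otimes> k \<otimes> inv (c \<otimes> h) = c \<otimes> (h \<otimes> k \<otimes> inv h) \<otimes> inv c"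
    "inv (c \<otimes> h) \<otimes> k \<otimes> (c \<otimes> h) = inv h \<otimes> (inv c \<otimes> k \<otimes> c) \<otimes> h" if "k \<in> K" for k
    using that K c(1) h(1) by (simp_all add: subset_iff inv_mult_group m_assoc)
  then show "c \<otimes> h \<in> ?N"
    using c h by (simp add: subset_iff)
next
  fix c
  assume "c \<in> ?N"
  then show "inv c \<in> ?N"
    by (simp add: conj_commute)
next
  have "\<one> \<in> ?N"
    using K by (simp add: subset_iff)
  then show "?N \<noteq> {}"
    by blast
qed auto

lemma (in group) generate_normalI:
  assumes gens: "carrier G = generate G A" and B: "B \<subseteq> carrier G"
    and conj: "\<And>a x. a \<in> A \<Longrightarrow> x \<in> B \<Longrightarrow> a \<otimes> x \<otimes> inv a \<in> generate G B"
    and conj_inv: "\<And>a x. a \<in> A \<Longrightarrow> x \<in> B \<Longrightarrow> inv a \<otimes> x \<otimes> a \<in> generate G B"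
  shows "generate G B \<lhd> G"
proof -
  let ?K = "generate G B"
  let ?N = "{c \<in> carrier G. \<forall>k\<in>?K. c \<otimes> k \<otimes> inv c \<in> ?K \<and> inv c \<otimes> k \<otimes> c \<in> ?K}"
  have K: "?K \<subseteq> carrier G"
    using generate_in_carrier[OF B] by blast
  have "A \<subseteq> ?N"
  proof
    fix a
    assume a: "a \<in> A"
    then have a_carrier: "a \<in> carrier G"
      using gens generate.incl[OF a] by simp
    have "inv a \<otimes> x \<otimes> inv (inv a) \<in> ?K" if "x \<in> B" for x
      using conj_inv[OF a that] a_carrier by simp
    then show "a \<in> ?N"
      using a_carrier conj_mem_generate[OF B a_carrier conj[OF a]]
        conj_mem_generate[OF B inv_closed[OF a_carrier]] by simp
  qed
  then have "generate G A \<subseteq> ?N"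
    by (rule generate_subgroup_incl[OF _ subgroup_conj_stable[OF K]])
  then have "carrier G \<subseteq> ?N"
    by (metis gens)
  then show ?thesis
    by (intro normal_invI generate_is_subgroup B) (auto simp: subset_iff)
qed

section \<open>Sorting distinct lists by adjacent transpositions\<close>

abbreviation adj_transp :: "nat \<Rightarrow> nat \<Rightarrow> nat" where
  "adj_transp m \<equiv> Transposition.transpose m (Suc m)"

lemma eq_upt_if_predecessors_first:
  assumes "distinct t" "\<forall>x\<in>set t. 1 \<le> x"
    and "\<forall>a xs ys. 1 \<le> a \<longrightarrow> t = xs @ Suc a # ys \<longrightarrow> a \<in> set xs"
  shows "t = [1..<Suc (length t)]"
  using assms
proof (induction t rule: rev_induct)
  case (snoc x t)
  have "\<forall>a xs ys. 1 \<le> a \<longrightarrow> t = xs @ Suc a # ys \<longrightarrow> a \<in> set xs"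
    using snoc.prems(3) by (auto dest!: spec[of _ "_ @ [x]"])
  then have t: "t = [1..<Suc (length t)]"
    using snoc.prems(1,2) by (intro snoc.IH) simp_all
  then have set_t: "set t = {1..length t}"
    by (metis atLeastLessThanSuc_atLeastAtMost set_upt)
  have x: "x \<notin> set t" "1 \<le> x"
    using snoc.prems by auto
  have "x = Suc (length t)"
  proof (cases "x = 1")
    case True
    then show ?thesis
      using x set_t by (cases "length t") auto
  next
    case False
    then have "x - 1 \<in> set t"
      using snoc.prems(3)[rule_format, of "x - 1" t "[]"] x by simp
    then show ?thesis
      using x set_t by auto
  qed
  then show ?case
    by (subst t) simp
qed simp

lemma distinct_list_adj_transp_induct:
  assumes base: "Q [1..<Suc r]"
    and step: "\<And>t m. Q t \<Longrightarrow> 1 \<le> m \<Longrightarrow> m < n \<Longrightarrow> distinct t \<Longrightarrow> set t \<subseteq> {1..n} \<Longrightarrow>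
      length t = r \<Longrightarrow> Q (map (adj_transp m) t)"
    and "distinct t" "set t \<subseteq> {1..n}" "length t = r"
  shows "Q t"
  using assms(3-)
proof (induction t rule: wf_induct[OF wf_lex[OF wf_less_than]])
  case (1 t)
  show ?case
  proof (cases "t = [1..<Suc r]")
    case True
    then show ?thesis
      using base by simp
  next
    case False
    txt \<open>Some a+1 occurs before a; swapping them makes t lexicographically smaller.\<close>
    moreover have "\<forall>x\<in>set t. 1 \<le> x"
      using 1 by auto
    ultimately obtain a xs ys where a: "1 \<le> a" "t = xs @ Suc a # ys" "a \<notin> set xs"
      using 1 eq_upt_if_predecessors_first[of t] by auto
    define t' where "t' = map (adj_transp a) t"
    have "Suc a \<notin> set xs" "a < n"
      using 1 a by auto
    then have "map (adj_transp a) xs = xs"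
      using a(3) by (auto intro!: map_idI simp: transpose_def)
    then have "t' = xs @ a # map (adj_transp a) ys"
      using a(2) by (simp add: t'_def)
    then have "(t', t) \<in> lex less_than"
      using a(2) by (simp add: lex_append_leftI)
    moreover have t': "distinct t'" "set t' \<subseteq> {1..n}" "length t' = r"
      using 1 a \<open>a < n\<close> by (auto simp: t'_def distinct_map transpose_def)
    ultimately have "Q t'"
      using 1 by simp
    then have "Q (map (adj_transp a) t')"
      using step a(1) \<open>a < n\<close> t' by simp
    then show ?thesis
      by (simp add: t'_def comp_def)
  qed
qed

section \<open>Conjugation by the rho generators of the virtual braid group\<close>

lemma vb_gens_iff [simp]:
  "Sig i \<in> vb_gens n \<longleftrightarrow> 1 \<le> i \<and> i < n" "Rho i \<in> vb_gens n \<longleftrightarrow> 1 \<le> i \<and> i < n"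
  by (auto simp: vb_gens_def)

lemma g_in_words [simp]: "g a \<in> words S \<longleftrightarrow> a \<in> S"
  by (simp add: g_def)

lemma group_presentation_VB: "group_presentation (vb_gens n) (vb_rels n)"
  unfolding group_presentation_def vb_rels_def by auto

interpretation VB: group_presentation "vb_gens n" "vb_rels n" for n
  by (rule group_presentation_VB)

lemmas group_VB = VB.group_presented_group[folded VB_def]
  and vb_elem_mult = VB.mult_word_class[folded VB_def vb_elem_def]
  and vb_elem_in_carrier = VB.word_class_in_carrier[folded VB_def vb_elem_def]
  and one_VB = VB.one_presented_group[folded VB_def vb_elem_def]

lemma vb_elem_relator: "(l, r) \<in> vb_rels n \<Longrightarrow> vb_elem n l = vb_elem n r"
  using VB.relator_word_class_eq by (simp add: vb_elem_def)

abbreviation rho_elem :: "nat \<Rightarrow> nat \<Rightarrow> vb_gen word set" where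
  "rho_elem n m \<equiv> vb_elem n (g (Rho m))"

abbreviation sigma_elem :: "nat \<Rightarrow> nat \<Rightarrow> vb_gen word set" where
  "sigma_elem n i \<equiv> vb_elem n (g (Sig i))"

definition conj_rho :: "nat \<Rightarrow> nat \<Rightarrow> vb_gen word set \<Rightarrow> vb_gen word set" where
  "conj_rho n m x = rho_elem n m \<otimes>\<^bsub>VB n\<^esub> x \<otimes>\<^bsub>VB n\<^esub> rho_elem n m"

context
  fixes n :: nat
begin

interpretation group "VB n"
  by (rule group_VB)

lemma rho_elem_in_carrier [simp]: "1 \<le> m \<Longrightarrow> m < n \<Longrightarrow> rho_elem n m \<in> carrier (VB n)"
  and sigma_elem_in_carrier [simp]: "1 \<le> i \<Longrightarrow> i < n \<Longrightarrow> sigma_elem n i \<in> carrier (VB n)"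
  by (simp_all add: vb_elem_in_carrier)

lemma vb_elem_two_letters:
  "a \<in> vb_gens n \<Longrightarrow> b \<in> vb_gens n \<Longrightarrow> vb_elem n (g a @ g b) = vb_elem n (g a) \<otimes>\<^bsub>VB n\<^esub> vb_elem n (g b)"
  by (simp add: vb_elem_mult)

lemma vb_elem_three_letters:
  "a \<in> vb_gens n \<Longrightarrow> b \<in> vb_gens n \<Longrightarrow> c \<in> vb_gens n \<Longrightarrow>
    vb_elem n (g a @ g b @ g c) = vb_elem n (g a) \<otimes>\<^bsub>VB n\<^esub> vb_elem n (g b) \<otimes>\<^bsub>VB n\<^esub> vb_elem n (g c)"
  by (simp add: vb_elem_mult)

context
  fixes i j :: nat
  assumes i: "1 \<le> i" "i < n" and j: "1 \<le> j" "j < n" and far: "i + 2 \<le> j \<or> j + 2 \<le> i"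
begin

lemma sigma_elem_commute:
  "sigma_elem n i \<otimes>\<^bsub>VB n\<^esub> sigma_elem n j = sigma_elem n j \<otimes>\<^bsub>VB n\<^esub> sigma_elem n i"
proof -
  have "(g (Sig i) @ g (Sig j), g (Sig j) @ g (Sig i)) \<in> vb_rels n"
    using i j far unfolding vb_rels_def g_def by auto
  from vb_elem_relator[OF this] show ?thesis
    using i j by (simp add: vb_elem_two_letters)
qed

lemma rho_elem_commute: "rho_elem n i \<otimes>\<^bsub>VB n\<^esub> rho_elem n j = rho_elem n j \<otimes>\<^bsub>VB n\<^esub> rho_elem n i"
proof -
  have "(g (Rho i) @ g (Rho j), g (Rho j) @ g (Rho i)) \<in> vb_rels n"
    using i j far unfolding vb_rels_def g_def by auto
  from vb_elem_relator[OF this] show ?thesis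
    using i j by (simp add: vb_elem_two_letters)
qed

lemma sigma_rho_elem_commute:
  "sigma_elem n i \<otimes>\<^bsub>VB n\<^esub> rho_elem n j = rho_elem n j \<otimes>\<^bsub>VB n\<^esub> sigma_elem n i"
proof -
  have "(g (Sig i) @ g (Rho j), g (Rho j) @ g (Sig i)) \<in> vb_rels n"
    using i j far unfolding vb_rels_def g_def by auto
  from vb_elem_relator[OF this] show ?thesis
    using i j by (simp add: vb_elem_two_letters)
qed

end

context
  fixes i :: nat
  assumes i: "1 \<le> i" "i + 2 \<le> n"
begin

lemma sigma_elem_braid:
  "sigma_elem n i \<otimes>\<^bsub>VB n\<^esub> sigma_elem n (Suc i) \<otimes>\<^bsub>VB n\<^esub> sigma_elem n i =
    sigma_elem n (Suc i) \<otimes>\<^bsub>VB n\<^esub> sigma_elem n i \<otimes>\<^bsub>VB n\<^esub> sigma_elem n (Suc i)"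
proof -
  have "(g (Sig i) @ g (Sig (i+1)) @ g (Sig i),
      g (Sig (i+1)) @ g (Sig i) @ g (Sig (i+1))) \<in> vb_rels n"
    using i unfolding vb_rels_def g_def by auto
  from vb_elem_relator[OF this] show ?thesis
    using i by (simp add: vb_elem_three_letters)
qed

lemma rho_elem_braid:
  "rho_elem n i \<otimes>\<^bsub>VB n\<^esub> rho_elem n (Suc i) \<otimes>\<^bsub>VB n\<^esub> rho_elem n i =
    rho_elem n (Suc i) \<otimes>\<^bsub>VB n\<^esub> rho_elem n i \<otimes>\<^bsub>VB n\<^esub> rho_elem n (Suc i)"
proof -
  have "(g (Rho i) @ g (Rho (i+1)) @ g (Rho i),
      g (Rho (i+1)) @ g (Rho i) @ g (Rho (i+1))) \<in> vb_rels n"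
    using i unfolding vb_rels_def g_def by auto
  from vb_elem_relator[OF this] show ?thesis
    using i by (simp add: vb_elem_three_letters)
qed

lemma rho_rho_sigma_elem:
  "rho_elem n i \<otimes>\<^bsub>VB n\<^esub> rho_elem n (Suc i) \<otimes>\<^bsub>VB n\<^esub> sigma_elem n i =
    sigma_elem n (Suc i) \<otimes>\<^bsub>VB n\<^esub> rho_elem n i \<otimes>\<^bsub>VB n\<^esub> rho_elem n (Suc i)"
proof -
  have "(g (Rho i) @ g (Rho (i+1)) @ g (Sig i),
      g (Sig (i+1)) @ g (Rho i) @ g (Rho (i+1))) \<in> vb_rels n"
    using i unfolding vb_rels_def g_def by auto
  from vb_elem_relator[OF this] show ?thesis
    using i by (simp add: vb_elem_three_letters)
qed

end

context
  fixes m :: nat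
  assumes m: "1 \<le> m" "m < n"
begin

lemma rho_elem_square: "rho_elem n m \<otimes>\<^bsub>VB n\<^esub> rho_elem n m = \<one>\<^bsub>VB n\<^esub>"
proof -
  have "(g (Rho m) @ g (Rho m), []) \<in> vb_rels n"
    using m unfolding vb_rels_def g_def by auto
  from vb_elem_relator[OF this] show ?thesis
    using m by (simp add: vb_elem_two_letters one_VB)
qed

lemma rho_elem_cancel: "x \<in> carrier (VB n) \<Longrightarrow> rho_elem n m \<otimes>\<^bsub>VB n\<^esub> (rho_elem n m \<otimes>\<^bsub>VB n\<^esub> x) = x"
  using m by (simp add: rho_elem_square flip: m_assoc)

lemma inv_rho_elem: "inv\<^bsub>VB n\<^esub> (rho_elem n m) = rho_elem n m"
  using m by (simp add: inv_equality rho_elem_square)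

end

lemma conj_rho_closed: "1 \<le> m \<Longrightarrow> m < n \<Longrightarrow> x \<in> carrier (VB n) \<Longrightarrow> conj_rho n m x \<in> carrier (VB n)"
  by (simp add: conj_rho_def)

lemma conj_rho_mult:
  assumes "1 \<le> m" "m < n" "x \<in> carrier (VB n)" "y \<in> carrier (VB n)"
  shows "conj_rho n m (x \<otimes>\<^bsub>VB n\<^esub> y) = conj_rho n m x \<otimes>\<^bsub>VB n\<^esub> conj_rho n m y"
  using assms by (simp add: conj_rho_def m_assoc rho_elem_cancel)

lemma conj_rho_conj_rho [simp]:
  "1 \<le> m \<Longrightarrow> m < n \<Longrightarrow> x \<in> carrier (VB n) \<Longrightarrow> conj_rho n m (conj_rho n m x) = x"
  by (simp add: conj_rho_def m_assoc rho_elem_square rho_elem_cancel)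

lemma conj_rho_eq_conj: "1 \<le> m \<Longrightarrow> m < n \<Longrightarrow> x \<in> carrier (VB n) \<Longrightarrow>
    conj_rho n m x = rho_elem n m \<otimes>\<^bsub>VB n\<^esub> x \<otimes>\<^bsub>VB n\<^esub> inv\<^bsub>VB n\<^esub> (rho_elem n m)"
  by (simp add: conj_rho_def inv_rho_elem)

lemma conj_rho_commute:
  assumes "1 \<le> m" "m < n" "1 \<le> j" "j < n" "m + 2 \<le> j \<or> j + 2 \<le> m" "x \<in> carrier (VB n)"
  shows "conj_rho n m (conj_rho n j x) = conj_rho n j (conj_rho n m x)"
proof -
  have "conj_rho n m (conj_rho n j x) =
      (rho_elem n m \<otimes>\<^bsub>VB n\<^esub> rho_elem n j) \<otimes>\<^bsub>VB n\<^esub> x \<otimes>\<^bsub>VB n\<^esub> (rho_elem n j \<otimes>\<^bsub>VB n\<^esub> rho_elem n m)"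
    using assms by (simp add: conj_rho_def m_assoc)
  also have "\<dots> = (rho_elem n j \<otimes>\<^bsub>VB n\<^esub> rho_elem n m) \<otimes>\<^bsub>VB n\<^esub> x \<otimes>\<^bsub>VB n\<^esub> (rho_elem n m \<otimes>\<^bsub>VB n\<^esub> rho_elem n j)"
    using assms by (simp add: rho_elem_commute)
  also have "\<dots> = conj_rho n j (conj_rho n m x)"
    using assms by (simp add: conj_rho_def m_assoc)
  finally show ?thesis .
qed

lemma conj_rho_braid:
  assumes "1 \<le> m" "m + 2 \<le> n" "x \<in> carrier (VB n)"
  shows "conj_rho n m (conj_rho n (Suc m) (conj_rho n m x)) =
    conj_rho n (Suc m) (conj_rho n m (conj_rho n (Suc m) x))"
proof -
  have "conj_rho n m (conj_rho n (Suc m) (conj_rho n m x)) =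
      (rho_elem n m \<otimes>\<^bsub>VB n\<^esub> rho_elem n (Suc m) \<otimes>\<^bsub>VB n\<^esub> rho_elem n m) \<otimes>\<^bsub>VB n\<^esub> x \<otimes>\<^bsub>VB n\<^esub>
      (rho_elem n m \<otimes>\<^bsub>VB n\<^esub> rho_elem n (Suc m) \<otimes>\<^bsub>VB n\<^esub> rho_elem n m)"
    using assms by (simp add: conj_rho_def m_assoc)
  also have "\<dots> = (rho_elem n (Suc m) \<otimes>\<^bsub>VB n\<^esub> rho_elem n m \<otimes>\<^bsub>VB n\<^esub> rho_elem n (Suc m)) \<otimes>\<^bsub>VB n\<^esub> x \<otimes>\<^bsub>VB n\<^esub>
      (rho_elem n (Suc m) \<otimes>\<^bsub>VB n\<^esub> rho_elem n m \<otimes>\<^bsub>VB n\<^esub> rho_elem n (Suc m))"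
    using assms by (simp add: rho_elem_braid)
  also have "\<dots> = conj_rho n (Suc m) (conj_rho n m (conj_rho n (Suc m) x))"
    using assms by (simp add: conj_rho_def m_assoc)
  finally show ?thesis .
qed

lemma conj_rho_sigma_elem_far:
  assumes "1 \<le> m" "m < n" "1 \<le> i" "i < n" "m + 2 \<le> i \<or> i + 2 \<le> m"
  shows "conj_rho n m (sigma_elem n i) = sigma_elem n i"
proof -
  have "rho_elem n m \<otimes>\<^bsub>VB n\<^esub> sigma_elem n i = sigma_elem n i \<otimes>\<^bsub>VB n\<^esub> rho_elem n m"
    using assms sigma_rho_elem_commute[of i m] by auto
  then have "conj_rho n m (sigma_elem n i) =
      sigma_elem n i \<otimes>\<^bsub>VB n\<^esub> rho_elem n m \<otimes>\<^bsub>VB n\<^esub> rho_elem n m"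
    by (simp add: conj_rho_def)
  then show ?thesis
    using assms by (simp add: m_assoc rho_elem_square)
qed

lemma conj_rho_conj_rho_sigma_elem:
  assumes "1 \<le> i" "i + 2 \<le> n"
  shows "conj_rho n i (conj_rho n (Suc i) (sigma_elem n i)) = sigma_elem n (Suc i)"
proof -
  have "conj_rho n i (conj_rho n (Suc i) (sigma_elem n i)) =
      (rho_elem n i \<otimes>\<^bsub>VB n\<^esub> rho_elem n (Suc i) \<otimes>\<^bsub>VB n\<^esub> sigma_elem n i)
        \<otimes>\<^bsub>VB n\<^esub> rho_elem n (Suc i) \<otimes>\<^bsub>VB n\<^esub> rho_elem n i"
    using assms by (simp add: conj_rho_def m_assoc)
  also have "\<dots> = sigma_elem n (Suc i) \<otimes>\<^bsub>VB n\<^esub> rho_elem n i \<otimes>\<^bsub>VB n\<^esub> rho_elem n (Suc i)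
      \<otimes>\<^bsub>VB n\<^esub> rho_elem n (Suc i) \<otimes>\<^bsub>VB n\<^esub> rho_elem n i"
    using assms by (simp only: rho_rho_sigma_elem)
  also have "\<dots> = sigma_elem n (Suc i)"
    using assms by (simp add: m_assoc rho_elem_cancel rho_elem_square)
  finally show ?thesis .
qed

end

lemma x_word_in_words: "(k, l) \<in> x_gens n \<Longrightarrow> x_word k l \<in> words (vb_gens n)"
  by (auto simp: x_word_def x_gens_def words_def g_def)

lemma x_elem_in_carrier: "(k, l) \<in> x_gens n \<Longrightarrow> x_elem n k l \<in> carrier (VB n)"
  by (simp add: x_elem_def x_word_in_words vb_elem_in_carrier)

lemma adj_transp_x_gens:
  "(k, l) \<in> x_gens n \<Longrightarrow> 1 \<le> m \<Longrightarrow> m < n \<Longrightarrow> (adj_transp m k, adj_transp m l) \<in> x_gens n"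
  by (auto simp: x_gens_def transpose_def)

lemma conj_rho_vb_elem:
  "1 \<le> m \<Longrightarrow> m < n \<Longrightarrow> w \<in> words (vb_gens n) \<Longrightarrow>
    conj_rho n m (vb_elem n w) = vb_elem n (g (Rho m) @ w @ g (Rho m))"
  by (simp add: conj_rho_def vb_elem_mult)

lemma x_elem_Suc_right: "x_elem n k (Suc k) = sigma_elem n k"
  by (simp add: x_elem_def x_word_def)

lemma x_elem_Suc_left: "1 \<le> k \<Longrightarrow> k < n \<Longrightarrow> x_elem n (Suc k) k = conj_rho n k (sigma_elem n k)"
  by (simp add: x_elem_def x_word_def conj_rho_vb_elem g_def)

lemma x_elem_extend_right:
  assumes "1 \<le> k" "k < l" "l < n"
  shows "x_elem n k (Suc l) = conj_rho n l (x_elem n k l)"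
proof -
  have "x_word k (Suc l) = g (Rho l) @ x_word k l @ g (Rho l)"
    using assms by (simp add: x_word_def g_def)
  moreover have "(k, l) \<in> x_gens n"
    using assms by (simp add: x_gens_def)
  ultimately show ?thesis
    using assms by (simp add: x_elem_def conj_rho_vb_elem x_word_in_words)
qed

lemma x_elem_extend_left:
  assumes "1 \<le> l" "l < k" "k < n"
  shows "x_elem n (Suc k) l = conj_rho n k (x_elem n k l)"
proof -
  have "x_word (Suc k) l = g (Rho k) @ x_word k l @ g (Rho k)"
    using assms by (simp add: x_word_def g_def)
  moreover have "(k, l) \<in> x_gens n"
    using assms by (simp add: x_gens_def)
  ultimately show ?thesis
    using assms by (simp add: x_elem_def conj_rho_vb_elem x_word_in_words)
qed

lemma conj_rho_sigma_elem:
  assumes "1 \<le> k" "k < n" "1 \<le> m" "m < n"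
  shows "conj_rho n m (sigma_elem n k) = x_elem n (adj_transp m k) (adj_transp m (Suc k))"
proof -
  consider "m = k" | "m = Suc k" | "Suc m = k" | "m + 2 \<le> k \<or> k + 2 \<le> m"
    by linarith
  then show ?thesis
  proof cases
    case 1
    then show ?thesis
      using assms by (simp add: x_elem_Suc_left)
  next
    case 2
    then show ?thesis
      using assms by (simp add: x_elem_extend_right[of k "Suc k"] flip: x_elem_Suc_right)
  next
    case 3
    then have k: "k = Suc m"
      by simp
    have "conj_rho n m (sigma_elem n k) =
        conj_rho n m (conj_rho n m (conj_rho n (Suc m) (sigma_elem n m)))"
      using k assms conj_rho_conj_rho_sigma_elem[of m n] by simp
    also have "\<dots> = conj_rho n (Suc m) (x_elem n m (Suc m))"
      using k assms by (simp add: conj_rho_closed x_elem_Suc_right)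
    also have "\<dots> = x_elem n m (Suc (Suc m))"
      using k assms by (simp add: x_elem_extend_right)
    finally show ?thesis
      using k by simp
  next
    case 4
    then show ?thesis
      using assms by (auto simp: conj_rho_sigma_elem_far x_elem_Suc_right transpose_def)
  qed
qed

lemma conj_rho_x_elem_Suc_left:
  assumes "1 \<le> l" "l < n" "1 \<le> m" "m < n"
  shows "conj_rho n m (x_elem n (Suc l) l) = x_elem n (adj_transp m (Suc l)) (adj_transp m l)"
proof -
  have x: "x_elem n (Suc l) l = conj_rho n l (sigma_elem n l)"
    using assms by (simp add: x_elem_Suc_left)
  consider "m = l" | "m = Suc l" | "Suc m = l" | "m + 2 \<le> l \<or> l + 2 \<le> m"
    by linarith
  then show ?thesis
  proof cases
    case 1
    then show ?thesis
      using assms by (simp add: x x_elem_Suc_right)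
  next
    case 2
    then show ?thesis
      using assms by (simp add: x_elem_extend_left)
  next
    case 3
    then have l: "l = Suc m"
      by simp
    have "conj_rho n m (x_elem n (Suc l) l) =
        conj_rho n m (conj_rho n (Suc m) (sigma_elem n (Suc m)))"
      using l x by simp
    also have "\<dots> = conj_rho n m (conj_rho n (Suc m)
        (conj_rho n m (conj_rho n (Suc m) (sigma_elem n m))))"
      using l assms by (simp add: conj_rho_conj_rho_sigma_elem)
    also have "\<dots> = conj_rho n (Suc m) (conj_rho n m
        (conj_rho n (Suc m) (conj_rho n (Suc m) (sigma_elem n m))))"
      using l assms by (intro conj_rho_braid conj_rho_closed) simp_all
    also have "\<dots> = x_elem n (Suc (Suc m)) m"
      using l assms by (simp add: x_elem_Suc_left x_elem_extend_left)
    finally show ?thesis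
      using l by simp
  next
    case 4
    then show ?thesis
      using assms by (auto simp: x conj_rho_commute conj_rho_sigma_elem_far transpose_def)
  qed
qed

lemma conj_rho_x_elem_less:
  assumes "1 \<le> k" "k < l" "l \<le> n" "1 \<le> m" "m < n"
  shows "conj_rho n m (x_elem n k l) = x_elem n (adj_transp m k) (adj_transp m l)"
  using assms
proof (induction l arbitrary: m rule: less_induct)
  case (less l)
  show ?case
  proof (cases "l = Suc k")
    case True
    then show ?thesis
      using less.prems by (simp add: x_elem_Suc_right conj_rho_sigma_elem)
  next
    case False
    then obtain j where l: "l = Suc j" and "k < j"
      using less.prems by (cases l) auto
    have x_carrier: "x_elem n k i \<in> carrier (VB n)" if "k < i" "i \<le> l" for i
      using less.prems that by (intro x_elem_in_carrier) (simp add: x_gens_def)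
    have x: "x_elem n k (Suc j) = conj_rho n j (x_elem n k j)"
      using less.prems \<open>k < j\<close> l by (simp add: x_elem_extend_right)
    consider "m = j" | "m = l" | "Suc m = j" | "m + 2 \<le> j \<or> j + 2 \<le> m"
      using l by linarith
    then show ?thesis
    proof cases
      case 1
      then show ?thesis
        using less.prems \<open>k < j\<close> l by (simp add: x x_carrier)
    next
      case 2
      then show ?thesis
        using less.prems \<open>k < j\<close> l by (simp add: x_elem_extend_right)
    next
      case 3
      then have j: "j = Suc m"
        by simp
      show ?thesis
      proof (cases "k < m")
        case True
        have "conj_rho n m (x_elem n k l) =
            conj_rho n m (conj_rho n j (conj_rho n m (x_elem n k m)))"
          using j l True less.prems by (simp add: x x_elem_extend_right)
        also have "\<dots> = conj_rho n j (conj_rho n m (conj_rho n j (x_elem n k m)))"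
          using j l True less.prems by (simp add: conj_rho_braid x_carrier)
        also have "conj_rho n j (x_elem n k m) = x_elem n k m"
          using j l True less.prems less.IH[of m j] by (simp add: transpose_def)
        also have "conj_rho n j (conj_rho n m (x_elem n k m)) = x_elem n k l"
          using j l True less.prems by (simp add: x x_elem_extend_right)
        finally show ?thesis
          using j l True by (simp add: transpose_def)
      next
        case False
        then have "k = m"
          using j \<open>k < j\<close> by simp
        then show ?thesis
          using j l less.prems x by (simp add: x_elem_Suc_right conj_rho_conj_rho_sigma_elem)
      qed
    next
      case 4
      then have tj: "adj_transp m j = j" and tl: "adj_transp m l = l"
        using l by (auto simp: transpose_def)
      have tk: "1 \<le> adj_transp m k" "adj_transp m k < j"
        using 4 less.prems \<open>k < j\<close> by (auto simp: transpose_def)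
      have "conj_rho n m (x_elem n k l) = conj_rho n j (conj_rho n m (x_elem n k j))"
        using 4 less.prems l \<open>k < j\<close> by (simp add: x conj_rho_commute x_carrier)
      also have "conj_rho n m (x_elem n k j) = x_elem n (adj_transp m k) j"
        using less.IH[of j m] less.prems l \<open>k < j\<close> tj by simp
      also have "conj_rho n j (x_elem n (adj_transp m k) j) = x_elem n (adj_transp m k) l"
        using less.prems l tk by (simp add: x_elem_extend_right)
      finally show ?thesis
        using tl by simp
    qed
  qed
qed

lemma conj_rho_x_elem_greater:
  assumes "1 \<le> l" "l < k" "k \<le> n" "1 \<le> m" "m < n"
  shows "conj_rho n m (x_elem n k l) = x_elem n (adj_transp m k) (adj_transp m l)"
  using assms
proof (induction k arbitrary: m rule: less_induct)
  case (less k)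
  show ?case
  proof (cases "k = Suc l")
    case True
    then show ?thesis
      using less.prems by (simp add: conj_rho_x_elem_Suc_left)
  next
    case False
    then obtain j where k: "k = Suc j" and "l < j"
      using less.prems by (cases k) auto
    have x_carrier: "x_elem n i l \<in> carrier (VB n)" if "l < i" "i \<le> k" for i
      using less.prems that by (intro x_elem_in_carrier) (simp add: x_gens_def)
    have x: "x_elem n (Suc j) l = conj_rho n j (x_elem n j l)"
      using less.prems \<open>l < j\<close> k by (simp add: x_elem_extend_left)
    consider "m = j" | "m = k" | "Suc m = j" | "m + 2 \<le> j \<or> j + 2 \<le> m"
      using k by linarith
    then show ?thesis
    proof cases
      case 1
      then show ?thesis
        using less.prems \<open>l < j\<close> k by (simp add: x x_carrier)
    next
      case 2
      then show ?thesis
        using less.prems \<open>l < j\<close> k by (simp add: x_elem_extend_left)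
    next
      case 3
      then have j: "j = Suc m"
        by simp
      show ?thesis
      proof (cases "l < m")
        case True
        have "conj_rho n m (x_elem n k l) =
            conj_rho n m (conj_rho n j (conj_rho n m (x_elem n m l)))"
          using j k True less.prems by (simp add: x x_elem_extend_left)
        also have "\<dots> = conj_rho n j (conj_rho n m (conj_rho n j (x_elem n m l)))"
          using j k True less.prems by (simp add: conj_rho_braid x_carrier)
        also have "conj_rho n j (x_elem n m l) = x_elem n m l"
          using j k True less.prems less.IH[of m j] by (simp add: transpose_def)
        also have "conj_rho n j (conj_rho n m (x_elem n m l)) = x_elem n k l"
          using j k True less.prems by (simp add: x x_elem_extend_left)
        finally show ?thesis
          using j k True by (simp add: transpose_def)
      next
        case False
        then have "l = m"
          using j \<open>l < j\<close> by simp
        then have "conj_rho n m (x_elem n k l) =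
            conj_rho n m (conj_rho n (Suc m) (conj_rho n m (sigma_elem n m)))"
          using x j k less.prems by (simp add: x_elem_Suc_left)
        also have "\<dots> = conj_rho n (Suc m) (conj_rho n m (conj_rho n (Suc m) (sigma_elem n m)))"
          using k j less.prems by (intro conj_rho_braid) simp_all
        also have "\<dots> = conj_rho n (Suc m) (sigma_elem n (Suc m))"
          using k j less.prems by (simp add: conj_rho_conj_rho_sigma_elem)
        finally show ?thesis
          using j k \<open>l = m\<close> less.prems by (simp add: x_elem_Suc_left)
      qed
    next
      case 4
      then have tj: "adj_transp m j = j" and tk: "adj_transp m k = k"
        using k by (auto simp: transpose_def)
      have tl: "1 \<le> adj_transp m l" "adj_transp m l < j"
        using 4 less.prems \<open>l < j\<close> by (auto simp: transpose_def)
      have "conj_rho n m (x_elem n k l) = conj_rho n j (conj_rho n m (x_elem n j l))"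
        using 4 less.prems k \<open>l < j\<close> by (simp add: x conj_rho_commute x_carrier)
      also have "conj_rho n m (x_elem n j l) = x_elem n j (adj_transp m l)"
        using less.IH[of j m] less.prems k \<open>l < j\<close> tj by simp
      also have "conj_rho n j (x_elem n j (adj_transp m l)) = x_elem n k (adj_transp m l)"
        using less.prems k tl by (simp add: x_elem_extend_left)
      finally show ?thesis
        using tk by simp
    qed
  qed
qed

lemma conj_rho_x_elem:
  assumes "(k, l) \<in> x_gens n" "1 \<le> m" "m < n"
  shows "conj_rho n m (x_elem n k l) = x_elem n (adj_transp m k) (adj_transp m l)"
proof (cases "k < l")
  case True
  then show ?thesis
    using assms conj_rho_x_elem_less by (simp add: x_gens_def)
next
  case False
  then show ?thesis
    using assms conj_rho_x_elem_greater by (simp add: x_gens_def)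
qed

section \<open>Relations among the x_(k,l) in the virtual braid group\<close>

lemma x_gens_induct [consumes 1, case_names base step]:
  assumes "(k, l) \<in> x_gens n" and base: "Q 1 2"
    and step: "\<And>k l m. (k, l) \<in> x_gens n \<Longrightarrow> 1 \<le> m \<Longrightarrow> m < n \<Longrightarrow> Q k l \<Longrightarrow>
      Q (adj_transp m k) (adj_transp m l)"
  shows "Q k l"
proof -
  have "(\<lambda>t. Q (t ! 0) (t ! 1)) [k, l]"
  proof (rule distinct_list_adj_transp_induct[where r = 2 and n = n])
    show "Q ([1..<Suc 2] ! 0) ([1..<Suc 2] ! 1)"
      using base by (simp add: upt_rec numeral_2_eq_2)
  next
    fix t m
    assume "Q (t ! 0) (t ! 1)" "1 \<le> m" "m < n" "distinct t" "set t \<subseteq> {1..n}" "length t = 2"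
    moreover from \<open>length t = 2\<close> obtain a b where "t = [a, b]"
      by (auto simp: length_Suc_conv numeral_eq_Suc)
    ultimately show "Q (map (adj_transp m) t ! 0) (map (adj_transp m) t ! 1)"
      using step[of a b m] by (simp add: x_gens_def)
  qed (use assms(1) in \<open>auto simp: x_gens_def\<close>)
  then show ?thesis
    by simp
qed

lemma length_le_if_distinct_in_range: "distinct t \<Longrightarrow> set t \<subseteq> {1..n} \<Longrightarrow> length t \<le> n"
  using card_mono[of "{1..n}" "set t"] by (simp add: distinct_card)

lemma x_elem_commute:
  assumes "(i, j) \<in> x_gens n" "(k, l) \<in> x_gens n" "distinct [i, j, k, l]"
  shows "x_elem n i j \<otimes>\<^bsub>VB n\<^esub> x_elem n k l = x_elem n k l \<otimes>\<^bsub>VB n\<^esub> x_elem n i j"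
proof -
  interpret group "VB n"
    by (rule group_VB)
  define Q where "Q t \<longleftrightarrow> x_elem n (t ! 0) (t ! 1) \<otimes>\<^bsub>VB n\<^esub> x_elem n (t ! 2) (t ! 3) =
    x_elem n (t ! 2) (t ! 3) \<otimes>\<^bsub>VB n\<^esub> x_elem n (t ! 0) (t ! 1)" for t
  have range: "set [i, j, k, l] \<subseteq> {1..n}"
    using assms by (auto simp: x_gens_def)
  have "length [i, j, k, l] \<le> n"
    using assms(3) range by (rule length_le_if_distinct_in_range)
  then have "4 \<le> n"
    by simp
  have "Q [i, j, k, l]"
  proof (rule distinct_list_adj_transp_induct[where r = 4 and n = n])
    have "[1..<Suc 4] = [1, 2, 3, 4 :: nat]"
      by (simp add: upt_rec)
    moreover have "x_elem n 1 2 = sigma_elem n 1" "x_elem n 3 4 = sigma_elem n 3"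
      by (simp_all add: x_elem_def x_word_def)
    ultimately show "Q [1..<Suc 4]"
      using \<open>4 \<le> n\<close> sigma_elem_commute[of 1 n 3] by (simp add: Q_def del: One_nat_def)
  next
    fix t m
    assume Q: "Q t" and m: "1 \<le> m" "m < n" and t: "distinct t" "set t \<subseteq> {1..n}" "length t = 4"
    then obtain a b c d where t_eq: "t = [a, b, c, d]"
      by (auto simp: length_Suc_conv numeral_eq_Suc)
    then have gens: "(a, b) \<in> x_gens n" "(c, d) \<in> x_gens n"
      using t by (auto simp: x_gens_def)
    have "conj_rho n m (x_elem n a b \<otimes>\<^bsub>VB n\<^esub> x_elem n c d) =
        conj_rho n m (x_elem n c d \<otimes>\<^bsub>VB n\<^esub> x_elem n a b)"
      using Q by (simp add: Q_def t_eq)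
    then show "Q (map (adj_transp m) t)"
      using gens m by (simp add: Q_def t_eq conj_rho_mult x_elem_in_carrier conj_rho_x_elem)
  qed (use assms range in auto)
  then show ?thesis
    by (simp add: Q_def)
qed

lemma x_elem_braid:
  assumes "(i, k) \<in> x_gens n" "(k, j) \<in> x_gens n" "distinct [i, j, k]"
  shows "x_elem n i k \<otimes>\<^bsub>VB n\<^esub> x_elem n k j \<otimes>\<^bsub>VB n\<^esub> x_elem n i k =
    x_elem n k j \<otimes>\<^bsub>VB n\<^esub> x_elem n i k \<otimes>\<^bsub>VB n\<^esub> x_elem n k j"
proof -
  interpret group "VB n"
    by (rule group_VB)
  define Q where "Q t \<longleftrightarrow>
    x_elem n (t ! 0) (t ! 1) \<otimes>\<^bsub>VB n\<^esub> x_elem n (t ! 1) (t ! 2) \<otimes>\<^bsub>VB n\<^esub> x_elem n (t ! 0) (t ! 1) =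
    x_elem n (t ! 1) (t ! 2) \<otimes>\<^bsub>VB n\<^esub> x_elem n (t ! 0) (t ! 1) \<otimes>\<^bsub>VB n\<^esub> x_elem n (t ! 1) (t ! 2)" for t
  have range: "set [i, k, j] \<subseteq> {1..n}"
    using assms by (auto simp: x_gens_def)
  moreover have "distinct [i, k, j]"
    using assms(3) by auto
  ultimately have "length [i, k, j] \<le> n"
    by (intro length_le_if_distinct_in_range)
  then have "3 \<le> n"
    by simp
  have "Q [i, k, j]"
  proof (rule distinct_list_adj_transp_induct[where r = 3 and n = n])
    have "[1..<Suc 3] = [1, 2, 3 :: nat]"
      by (simp add: upt_rec)
    moreover have "x_elem n 1 2 = sigma_elem n 1" "x_elem n 2 3 = sigma_elem n 2"
      by (simp_all add: x_elem_def x_word_def)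
    ultimately show "Q [1..<Suc 3]"
      using \<open>3 \<le> n\<close> sigma_elem_braid[of 1 n] by (simp add: Q_def del: One_nat_def)
  next
    fix t m
    assume Q: "Q t" and m: "1 \<le> m" "m < n" and t: "distinct t" "set t \<subseteq> {1..n}" "length t = 3"
    then obtain a b c where t_eq: "t = [a, b, c]"
      by (auto simp: length_Suc_conv numeral_eq_Suc)
    then have gens: "(a, b) \<in> x_gens n" "(b, c) \<in> x_gens n"
      using t by (auto simp: x_gens_def)
    have "conj_rho n m (x_elem n a b \<otimes>\<^bsub>VB n\<^esub> x_elem n b c \<otimes>\<^bsub>VB n\<^esub> x_elem n a b) =
        conj_rho n m (x_elem n b c \<otimes>\<^bsub>VB n\<^esub> x_elem n a b \<otimes>\<^bsub>VB n\<^esub> x_elem n b c)"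
      using Q by (simp add: Q_def t_eq)
    then show "Q (map (adj_transp m) t)"
      using gens m by (simp add: Q_def t_eq conj_rho_mult x_elem_in_carrier conj_rho_x_elem)
  qed (use assms range in auto)
  then show ?thesis
    by (simp add: Q_def)
qed

section \<open>The group P_n and the action of the symmetric group on it\<close>

lemma group_presentation_P: "group_presentation (x_gens n) (x_rels n)"
  unfolding group_presentation_def x_rels_def by (auto simp: xg_def)

interpretation P: group_presentation "x_gens n" "x_rels n" for n
  by (rule group_presentation_P)

abbreviation xgen :: "nat \<Rightarrow> nat \<Rightarrow> nat \<Rightarrow> (nat \<times> nat) word set" where
  "xgen n k l \<equiv> gen_elem (x_gens n) (x_rels n) (k, l)"

lemmas group_P = P.group_presented_group[folded P_def]
  and xgen_in_carrier = P.gen_elem_in_carrier[folded P_def]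

lemma xgen_mult: "(i, j) \<in> x_gens n \<Longrightarrow> (k, l) \<in> x_gens n \<Longrightarrow>
    xgen n i j \<otimes>\<^bsub>P n\<^esub> xgen n k l = P.word_class n (xg i j @ xg k l)"
  by (simp add: P_def gen_elem_def xg_def P.mult_word_class)

lemma x_rels_commI:
  "(i, j) \<in> x_gens n \<Longrightarrow> (k, l) \<in> x_gens n \<Longrightarrow> distinct [i, j, k, l] \<Longrightarrow>
    (xg i j @ xg k l, xg k l @ xg i j) \<in> x_rels n"
  unfolding x_rels_def by blast

lemma x_rels_braidI:
  "(i, k) \<in> x_gens n \<Longrightarrow> (k, j) \<in> x_gens n \<Longrightarrow> distinct [i, j, k] \<Longrightarrow>
    (xg i k @ xg k j @ xg i k, xg k j @ xg i k @ xg k j) \<in> x_rels n"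
  unfolding x_rels_def by blast

lemma xgen_commute:
  assumes "(i, j) \<in> x_gens n" "(k, l) \<in> x_gens n" "distinct [i, j, k, l]"
  shows "xgen n i j \<otimes>\<^bsub>P n\<^esub> xgen n k l = xgen n k l \<otimes>\<^bsub>P n\<^esub> xgen n i j"
proof -
  have "(xg i j @ xg k l, xg k l @ xg i j) \<in> x_rels n"
    using assms by (rule x_rels_commI)
  then show ?thesis
    using assms by (simp add: xgen_mult P.relator_word_class_eq)
qed

lemma xgen_braid:
  assumes "(i, k) \<in> x_gens n" "(k, j) \<in> x_gens n" "distinct [i, j, k]"
  shows "xgen n i k \<otimes>\<^bsub>P n\<^esub> xgen n k j \<otimes>\<^bsub>P n\<^esub> xgen n i k =
    xgen n k j \<otimes>\<^bsub>P n\<^esub> xgen n i k \<otimes>\<^bsub>P n\<^esub> xgen n k j"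
proof -
  have "(xg i k @ xg k j @ xg i k, xg k j @ xg i k @ xg k j) \<in> x_rels n"
    using assms by (rule x_rels_braidI)
  then have "P.word_class n ((xg i k @ xg k j) @ xg i k) =
      P.word_class n ((xg k j @ xg i k) @ xg k j)"
    using P.relator_word_class_eq by simp
  then show ?thesis
    using assms by (simp add: xgen_mult P_def P.mult_word_class gen_elem_def xg_def)
qed

definition perm_action :: "nat \<Rightarrow> (nat \<Rightarrow> nat) \<Rightarrow> (nat \<times> nat) word set \<Rightarrow> (nat \<times> nat) word set" where
  "perm_action n \<pi> = group_presentation.relabel (x_gens n) (x_rels n) (map_prod \<pi> \<pi>)"

context
  fixes n :: nat and \<pi> :: "nat \<Rightarrow> nat"
  assumes perm: "\<pi> permutes {1..n}"
begin

lemma map_prod_x_gens: "map_prod \<pi> \<pi> \<in> x_gens n \<rightarrow> x_gens n"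
proof
  fix a
  assume "a \<in> x_gens n"
  then obtain k l where "a = (k, l)" "k \<in> {1..n}" "l \<in> {1..n}" "k \<noteq> l"
    by (auto simp: x_gens_def)
  moreover have "\<pi> k \<noteq> \<pi> l"
    using \<open>k \<noteq> l\<close> permutes_inj[OF perm] by (metis injD)
  ultimately show "map_prod \<pi> \<pi> a \<in> x_gens n"
    using permutes_in_image[OF perm] by (auto simp: x_gens_def)
qed

lemma map_prod_x_rels:
  assumes "(l, r) \<in> x_rels n"
  shows "(map (apfst (map_prod \<pi> \<pi>)) l, map (apfst (map_prod \<pi> \<pi>)) r) \<in> x_rels n"
proof -
  have gens: "(\<pi> i, \<pi> j) \<in> x_gens n" if "(i, j) \<in> x_gens n" for i j
    using funcset_mem[OF map_prod_x_gens that] by simp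
  have distinct: "distinct (map \<pi> xs)" if "distinct xs" for xs
    using that inj_on_subset[OF permutes_inj[OF perm] subset_UNIV] by (simp add: distinct_map)
  have xg: "map (apfst (map_prod \<pi> \<pi>)) (xg i j) = xg (\<pi> i) (\<pi> j)" for i j
    by (simp add: xg_def)
  from assms[unfolded x_rels_def] show ?thesis
  proof (elim UnE CollectE exE conjE)
    fix i j k l'
    assume "(l, r) = (xg i j @ xg k l', xg k l' @ xg i j)" "(i, j) \<in> x_gens n" "(k, l') \<in> x_gens n"
      "distinct [i, j, k, l']"
    then show ?thesis
      using gens distinct[of "[i, j, k, l']"] by (simp add: xg x_rels_commI)
  next
    fix i j k
    assume "(l, r) = (xg i k @ xg k j @ xg i k, xg k j @ xg i k @ xg k j)" "(i, k) \<in> x_gens n"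
      "(k, j) \<in> x_gens n" "distinct [i, j, k]"
    then show ?thesis
      using gens distinct[of "[i, j, k]"] by (simp add: xg x_rels_braidI)
  qed
qed

lemma perm_action_hom: "perm_action n \<pi> \<in> hom (P n) (P n)"
  unfolding perm_action_def P_def by (rule P.relabel_hom[OF map_prod_x_gens map_prod_x_rels])

lemma perm_action_word_class:
  "w \<in> words (x_gens n) \<Longrightarrow>
    perm_action n \<pi> (P.word_class n w) = P.word_class n (map (apfst (map_prod \<pi> \<pi>)) w)"
  unfolding perm_action_def by (rule P.relabel_word_class[OF map_prod_x_gens map_prod_x_rels])

lemma perm_action_xgen: "(k, l) \<in> x_gens n \<Longrightarrow> perm_action n \<pi> (xgen n k l) = xgen n (\<pi> k) (\<pi> l)"
  by (simp add: gen_elem_def perm_action_word_class)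

lemma perm_action_one: "perm_action n \<pi> \<one>\<^bsub>P n\<^esub> = \<one>\<^bsub>P n\<^esub>"
  using perm_action_word_class[of "[]"] by (simp add: P_def P.one_presented_group)

end

lemma perm_action_comp:
  assumes "\<pi> permutes {1..n}" "\<sigma> permutes {1..n}" "p \<in> carrier (P n)"
  shows "perm_action n (\<pi> \<circ> \<sigma>) p = perm_action n \<pi> (perm_action n \<sigma> p)"
proof -
  obtain w where w: "w \<in> words (x_gens n)" "p = P.word_class n w"
    using assms(3) by (auto simp: P_def P.carrier_presented_group)
  moreover have "map (apfst (map_prod \<sigma> \<sigma>)) w \<in> words (x_gens n)"
    using w(1) map_prod_x_gens[OF assms(2)] by (rule words_map)
  moreover have "map (apfst (map_prod (\<pi> \<circ> \<sigma>) (\<pi> \<circ> \<sigma>))) w =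
      map (apfst (map_prod \<pi> \<pi>)) (map (apfst (map_prod \<sigma> \<sigma>)) w)"
    by (induction w) auto
  ultimately show ?thesis
    using assms by (simp add: perm_action_word_class permutes_compose del: map_map)
qed

lemma perm_action_id:
  assumes "p \<in> carrier (P n)"
  shows "perm_action n id p = p"
proof -
  obtain w where w: "w \<in> words (x_gens n)" "p = P.word_class n w"
    using assms by (auto simp: P_def P.carrier_presented_group)
  moreover have "map (apfst (map_prod id id)) w = w"
    by (induction w) auto
  ultimately show ?thesis
    by (simp add: perm_action_word_class)
qed

section \<open>Maps between P_n, VB_n and the semidirect product\<close>

definition P_rtimes_S :: "nat \<Rightarrow> ((nat \<times> nat) word set \<times> (nat \<Rightarrow> nat)) monoid" where
  "P_rtimes_S n = semidirect_product (P n) (sym_group n) (perm_action n)"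

lemma group_P_rtimes_S: "group (P_rtimes_S n)"
  unfolding P_rtimes_S_def
  by (rule group_semidirect_product[OF group_P sym_group_is_group])
     (auto simp: sym_group_def perm_action_hom perm_action_comp perm_action_id)

lemma carrier_P_rtimes_S: "carrier (P_rtimes_S n) = carrier (P n) \<times> {\<pi>. \<pi> permutes {1..n}}"
  and mult_P_rtimes_S [simp]:
  "(x, \<pi>) \<otimes>\<^bsub>P_rtimes_S n\<^esub> (y, \<sigma>) = (x \<otimes>\<^bsub>P n\<^esub> perm_action n \<pi> y, \<pi> \<circ> \<sigma>)"
  and one_P_rtimes_S [simp]: "\<one>\<^bsub>P_rtimes_S n\<^esub> = (\<one>\<^bsub>P n\<^esub>, id)"
  by (simp_all add: P_rtimes_S_def sym_group_def)

lemma adj_transp_permutes: "1 \<le> i \<Longrightarrow> i < n \<Longrightarrow> adj_transp i permutes {1..n}"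
  by (simp add: permutes_swap_id)

definition rtimes_gen :: "nat \<Rightarrow> vb_gen \<Rightarrow> (nat \<times> nat) word set \<times> (nat \<Rightarrow> nat)" where
  "rtimes_gen n a = (case a of Sig i \<Rightarrow> (xgen n i (Suc i), id) | Rho i \<Rightarrow> (\<one>\<^bsub>P n\<^esub>, adj_transp i))"

lemma rtimes_gen_simps [simp]:
  "rtimes_gen n (Sig i) = (xgen n i (Suc i), id)" "rtimes_gen n (Rho i) = (\<one>\<^bsub>P n\<^esub>, adj_transp i)"
  by (simp_all add: rtimes_gen_def)

lemma Suc_in_x_gens: "1 \<le> i \<Longrightarrow> i < n \<Longrightarrow> (i, Suc i) \<in> x_gens n"
  by (simp add: x_gens_def)

lemma rtimes_gen_in_carrier: "rtimes_gen n \<in> vb_gens n \<rightarrow> carrier (P_rtimes_S n)"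
proof
  interpret group "P n"
    by (rule group_P)
  fix a
  assume a: "a \<in> vb_gens n"
  show "rtimes_gen n a \<in> carrier (P_rtimes_S n)"
  proof (cases a)
    case (Sig i)
    then show ?thesis
      using a xgen_in_carrier[OF Suc_in_x_gens, of i n] by (simp add: carrier_P_rtimes_S)
  next
    case (Rho i)
    then show ?thesis
      using a adj_transp_permutes[of i n] by (simp add: carrier_P_rtimes_S)
  qed
qed

lemma adj_transp_braid:
  "adj_transp i \<circ> adj_transp (Suc i) \<circ> adj_transp i =
    adj_transp (Suc i) \<circ> adj_transp i \<circ> adj_transp (Suc i)"
  by (auto simp: fun_eq_iff transpose_def)

lemma adj_transp_commute:
  "i + 2 \<le> j \<or> j + 2 \<le> i \<Longrightarrow> adj_transp i \<circ> adj_transp j = adj_transp j \<circ> adj_transp i"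
  by (auto simp: fun_eq_iff transpose_def)

lemma perm_action_adj_transp_xgen_far:
  assumes "1 \<le> i" "i < n" "1 \<le> j" "j < n" "j + 2 \<le> i \<or> i + 2 \<le> j"
  shows "perm_action n (adj_transp j) (xgen n i (Suc i)) = xgen n i (Suc i)"
  using assms perm_action_xgen[OF adj_transp_permutes Suc_in_x_gens, of j n i]
  by (auto simp: transpose_def)

lemma perm_action_adj_transp_xgen_mixed:
  assumes "1 \<le> i" "i + 2 \<le> n"
  shows "perm_action n (adj_transp i) (perm_action n (adj_transp (Suc i)) (xgen n i (Suc i))) =
    xgen n (Suc i) (Suc (Suc i))"
proof -
  have perms: "adj_transp i permutes {1..n}" "adj_transp (Suc i) permutes {1..n}"
    using assms adj_transp_permutes[of i n] adj_transp_permutes[of "Suc i" n] by simp_all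
  have gens: "(i, Suc i) \<in> x_gens n" "(i, Suc (Suc i)) \<in> x_gens n"
    using assms by (auto simp: x_gens_def)
  show ?thesis
    using perm_action_xgen[OF perms(2) gens(1)] perm_action_xgen[OF perms(1) gens(2)] by simp
qed

lemma rtimes_gen_relators:
  assumes "(l, r) \<in> vb_rels n"
  shows "eval_word (P_rtimes_S n) (rtimes_gen n) l = eval_word (P_rtimes_S n) (rtimes_gen n) r"
proof -
  interpret group "P n"
    by (rule group_P)
  have xgen: "xgen n i j \<in> carrier (P n)" if "1 \<le> i" "i < j" "j \<le> n" for i j
    using that by (intro xgen_in_carrier) (simp add: x_gens_def)
  have one: "perm_action n (adj_transp i) \<one>\<^bsub>P n\<^esub> = \<one>\<^bsub>P n\<^esub>" if "1 \<le> i" "i < n" for i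
    using perm_action_one[OF adj_transp_permutes[OF that]] .
  have id: "perm_action n id x = x" if "x \<in> carrier (P n)" for x
    using that by (rule perm_action_id)
  have id_one: "perm_action n id \<one>\<^bsub>P n\<^esub> = \<one>\<^bsub>P n\<^esub>"
    by (simp add: id)
  from assms[unfolded vb_rels_def] show ?thesis
  proof (elim UnE CollectE exE conjE)
    fix i
    assume "(l, r) = (g (Sig i) @ g (Sig (i + 1)) @ g (Sig i),
      g (Sig (i + 1)) @ g (Sig i) @ g (Sig (i + 1)))" "1 \<le> i" "i \<le> n - 2"
    then show ?thesis
      using xgen_braid[of i "Suc i" n "Suc (Suc i)"]
      by (simp add: g_def xgen id Suc_in_x_gens m_assoc)
  next
    fix i j
    assume "(l, r) = (g (Sig i) @ g (Sig j), g (Sig j) @ g (Sig i))" "1 \<le> i" "i \<le> n - 1"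
      "1 \<le> j" "j \<le> n - 1" "j + 2 \<le> i \<or> i + 2 \<le> j"
    then show ?thesis
      using xgen_commute[of i "Suc i" n j "Suc j"] by (auto simp: g_def xgen id Suc_in_x_gens)
  next
    fix i
    assume "(l, r) = (g (Rho i) @ g (Rho (i + 1)) @ g (Rho i),
      g (Rho (i + 1)) @ g (Rho i) @ g (Rho (i + 1)))" "1 \<le> i" "i \<le> n - 2"
    then show ?thesis
      using adj_transp_braid[of i] by (simp add: g_def one comp_assoc)
  next
    fix i j
    assume "(l, r) = (g (Rho i) @ g (Rho j), g (Rho j) @ g (Rho i))" "1 \<le> i" "i \<le> n - 1"
      "1 \<le> j" "j \<le> n - 1" "j + 2 \<le> i \<or> i + 2 \<le> j"
    then show ?thesis
      using adj_transp_commute[of j i] by (simp add: g_def one)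
  next
    fix i
    assume "(l, r) = (g (Rho i) @ g (Rho i), [])" "1 \<le> i" "i \<le> n - 1"
    then show ?thesis
      by (simp add: g_def one)
  next
    fix i j
    assume "(l, r) = (g (Sig i) @ g (Rho j), g (Rho j) @ g (Sig i))" "1 \<le> i" "i \<le> n - 1"
      "1 \<le> j" "j \<le> n - 1" "j + 2 \<le> i \<or> i + 2 \<le> j"
    moreover have "i < n" "j < n"
      using \<open>1 \<le> i\<close> \<open>i \<le> n - 1\<close> \<open>1 \<le> j\<close> \<open>j \<le> n - 1\<close> by simp_all
    ultimately show ?thesis
      using perm_action_adj_transp_xgen_far[of i n j] by (simp add: g_def one xgen id_one)
  next
    fix i
    assume "(l, r) = (g (Rho i) @ g (Rho (i + 1)) @ g (Sig i),
      g (Sig (i + 1)) @ g (Rho i) @ g (Rho (i + 1)))" "1 \<le> i" "i \<le> n - 2"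
    then show ?thesis
      using perm_action_adj_transp_xgen_mixed[of i n]
        perm_action_xgen[OF adj_transp_permutes, of "Suc i" n i "Suc i"]
      by (simp add: g_def one xgen id_one Suc_in_x_gens)
  qed
qed

definition VB_to_P_rtimes_S :: "nat \<Rightarrow> vb_gen word set \<Rightarrow> (nat \<times> nat) word set \<times> (nat \<Rightarrow> nat)" where
  "VB_to_P_rtimes_S n = induced_map (P_rtimes_S n) (rtimes_gen n)"

lemma VB_to_P_rtimes_S_hom: "VB_to_P_rtimes_S n \<in> hom (VB n) (P_rtimes_S n)"
  using VB.induced_map_hom[OF group_P_rtimes_S rtimes_gen_in_carrier rtimes_gen_relators]
  by (simp add: VB_to_P_rtimes_S_def VB_def)

lemma VB_to_P_rtimes_S_gen: "a \<in> vb_gens n \<Longrightarrow> VB_to_P_rtimes_S n (vb_elem n (g a)) = rtimes_gen n a"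
  using VB.induced_map_gen_elem[OF group_P_rtimes_S rtimes_gen_in_carrier rtimes_gen_relators]
  by (simp add: VB_to_P_rtimes_S_def gen_elem_def vb_elem_def g_def)

lemma VB_to_P_rtimes_S_x_elem:
  assumes "(k, l) \<in> x_gens n"
  shows "VB_to_P_rtimes_S n (x_elem n k l) = (xgen n k l, id)"
  using assms
proof (induction rule: x_gens_induct)
  case base
  have "1 < n"
    using assms by (auto simp: x_gens_def)
  then show ?case
    using VB_to_P_rtimes_S_gen[of "Sig 1" n]
    by (simp add: x_elem_def x_word_def numeral_2_eq_2 id_def)
next
  case (step k l m)
  interpret P: group "P n"
    by (rule group_P)
  interpret VB: group "VB n"
    by (rule group_VB)
  have perm: "adj_transp m permutes {1..n}"
    using step.hyps(2,3) by (rule adj_transp_permutes)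
  have "VB_to_P_rtimes_S n (x_elem n (adj_transp m k) (adj_transp m l)) =
      VB_to_P_rtimes_S n (conj_rho n m (x_elem n k l))"
    using step.hyps by (simp add: conj_rho_x_elem)
  also have "\<dots> = VB_to_P_rtimes_S n (rho_elem n m) \<otimes>\<^bsub>P_rtimes_S n\<^esub> VB_to_P_rtimes_S n (x_elem n k l)
      \<otimes>\<^bsub>P_rtimes_S n\<^esub> VB_to_P_rtimes_S n (rho_elem n m)"
    using step.hyps by (simp add: conj_rho_def hom_mult[OF VB_to_P_rtimes_S_hom] x_elem_in_carrier)
  also have "\<dots> = (xgen n (adj_transp m k) (adj_transp m l), id)"
    using step perm by (simp add: VB_to_P_rtimes_S_gen perm_action_xgen perm_action_one
        xgen_in_carrier adj_transp_x_gens o_def fun_eq_iff)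
  finally show ?case .
qed

definition P_to_VB :: "nat \<Rightarrow> (nat \<times> nat) word set \<Rightarrow> vb_gen word set" where
  "P_to_VB n = induced_map (VB n) (\<lambda>(k, l). x_elem n k l)"

lemma x_elem_funcset: "(\<lambda>(k, l). x_elem n k l) \<in> x_gens n \<rightarrow> carrier (VB n)"
  by (auto simp: x_elem_in_carrier)

lemma x_elem_relators:
  assumes "(u, v) \<in> x_rels n"
  shows "eval_word (VB n) (\<lambda>(k, l). x_elem n k l) u = eval_word (VB n) (\<lambda>(k, l). x_elem n k l) v"
proof -
  interpret group "VB n"
    by (rule group_VB)
  from assms[unfolded x_rels_def] show ?thesis
  proof (elim UnE CollectE exE conjE)
    fix i j k l
    assume "(u, v) = (xg i j @ xg k l, xg k l @ xg i j)" "(i, j) \<in> x_gens n" "(k, l) \<in> x_gens n"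
      "distinct [i, j, k, l]"
    then show ?thesis
      using x_elem_commute[of i j n k l] by (simp add: xg_def x_elem_in_carrier)
  next
    fix i j k
    assume "(u, v) = (xg i k @ xg k j @ xg i k, xg k j @ xg i k @ xg k j)" "(i, k) \<in> x_gens n"
      "(k, j) \<in> x_gens n" "distinct [i, j, k]"
    then show ?thesis
      using x_elem_braid[of i k n j] by (simp add: xg_def x_elem_in_carrier m_assoc)
  qed
qed

lemma P_to_VB_hom: "P_to_VB n \<in> hom (P n) (VB n)"
  using P.induced_map_hom[OF group_VB x_elem_funcset x_elem_relators]
  by (simp add: P_to_VB_def P_def)

lemma P_to_VB_xgen: "(k, l) \<in> x_gens n \<Longrightarrow> P_to_VB n (xgen n k l) = x_elem n k l"
  using P.induced_map_gen_elem[OF group_VB x_elem_funcset x_elem_relators]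
  by (simp add: P_to_VB_def)

lemma P_to_VB_image:
  "P_to_VB n ` carrier (P n) = generate (VB n) {x_elem n k l | k l. (k, l) \<in> x_gens n}"
proof -
  have "(\<lambda>(k, l). x_elem n k l) ` x_gens n = {x_elem n k l | k l. (k, l) \<in> x_gens n}"
    by auto
  then show ?thesis
    using P.induced_map_image[OF group_VB x_elem_funcset x_elem_relators]
    by (simp add: P_to_VB_def P_def)
qed

lemma VB_to_P_rtimes_S_P_to_VB:
  assumes "p \<in> carrier (P n)"
  shows "VB_to_P_rtimes_S n (P_to_VB n p) = (p, id)"
proof -
  have "VB_to_P_rtimes_S n \<circ> P_to_VB n \<in> hom (P n) (P_rtimes_S n)"
    using P_to_VB_hom VB_to_P_rtimes_S_hom by (rule hom_compose)
  moreover have "(\<lambda>p. (p, id)) \<in> hom (P n) (P_rtimes_S n)"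
    by (rule homI) (simp_all add: carrier_P_rtimes_S perm_action_id)
  moreover have "(VB_to_P_rtimes_S n \<circ> P_to_VB n) (gen_elem (x_gens n) (x_rels n) a) =
      (gen_elem (x_gens n) (x_rels n) a, id)"
    if "a \<in> x_gens n" for a
    using that by (cases a) (simp add: P_to_VB_xgen VB_to_P_rtimes_S_x_elem)
  ultimately have "(VB_to_P_rtimes_S n \<circ> P_to_VB n) p = (p, id)"
    using P.hom_eq_on_generators[folded P_def, OF group_P_rtimes_S _ _ _ assms] by blast
  then show ?thesis
    by simp
qed

lemma inj_on_P_to_VB: "inj_on (P_to_VB n) (carrier (P n))"
  by (rule inj_onI) (metis VB_to_P_rtimes_S_P_to_VB prod.inject)

section \<open>H_n is generated by the x_(k,l)\<close>

lemma carrier_VB_generate: "carrier (VB n) = generate (VB n) ((\<lambda>a. vb_elem n (g a)) ` vb_gens n)"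
  using VB.carrier_presented_group_generate[of n]
  by (simp add: VB_def gen_elem_def vb_elem_def g_def)

lemma generate_x_elem_normal: "generate (VB n) {x_elem n k l | k l. (k, l) \<in> x_gens n} \<lhd> VB n"
proof -
  interpret group "VB n"
    by (rule group_VB)
  let ?X = "{x_elem n k l | k l. (k, l) \<in> x_gens n}"
  have X: "?X \<subseteq> carrier (VB n)"
    by (auto simp: x_elem_in_carrier)
  have K: "subgroup (generate (VB n) ?X) (VB n)"
    using X by (rule generate_is_subgroup)
  have conj: "c \<otimes>\<^bsub>VB n\<^esub> x \<otimes>\<^bsub>VB n\<^esub> inv\<^bsub>VB n\<^esub> c \<in> generate (VB n) ?X \<and>
      inv\<^bsub>VB n\<^esub> c \<otimes>\<^bsub>VB n\<^esub> x \<otimes>\<^bsub>VB n\<^esub> c \<in> generate (VB n) ?X"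
    if a: "a \<in> vb_gens n" and c: "c = vb_elem n (g a)" and x: "x \<in> ?X" for a c x
  proof (cases a)
    case (Sig i)
    then have "c = x_elem n i (Suc i)" "(i, Suc i) \<in> x_gens n"
      using a c Sig by (simp_all add: x_elem_Suc_right Suc_in_x_gens)
    then have "c \<in> generate (VB n) ?X"
      by (blast intro: generate.incl)
    moreover have "x \<in> generate (VB n) ?X"
      using x by (rule generate.incl)
    ultimately show ?thesis
      using K by (simp add: subgroup.m_closed subgroup.m_inv_closed)
  next
    case (Rho m)
    obtain k l where kl: "x = x_elem n k l" "(k, l) \<in> x_gens n"
      using x by blast
    have "c \<otimes>\<^bsub>VB n\<^esub> x \<otimes>\<^bsub>VB n\<^esub> inv\<^bsub>VB n\<^esub> c = x_elem n (adj_transp m k) (adj_transp m l)"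
      using a c Rho kl by (simp add: conj_rho_x_elem[symmetric] conj_rho_eq_conj x_elem_in_carrier)
    moreover have "inv\<^bsub>VB n\<^esub> c \<otimes>\<^bsub>VB n\<^esub> x \<otimes>\<^bsub>VB n\<^esub> c = c \<otimes>\<^bsub>VB n\<^esub> x \<otimes>\<^bsub>VB n\<^esub> inv\<^bsub>VB n\<^esub> c"
      using a c Rho by (simp add: inv_rho_elem)
    ultimately show ?thesis
      using a Rho kl adj_transp_x_gens[of k l n m] by (auto intro!: generate.incl)
  qed
  show ?thesis
    by (rule generate_normalI[OF carrier_VB_generate X]) (use conj in blast)+
qed

lemma x_elem_in_normal:
  assumes "N \<lhd> VB n" "{vb_elem n (g (Sig i)) | i. 1 \<le> i \<and> i \<le> n - 1} \<subseteq> N" "(k, l) \<in> x_gens n"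
  shows "x_elem n k l \<in> N"
  using assms(3)
proof (induction rule: x_gens_induct)
  case base
  have "x_elem n 1 2 = vb_elem n (g (Sig 1))"
    by (simp add: x_elem_def x_word_def)
  moreover have "1 \<le> n - 1"
    using assms(3) by (auto simp: x_gens_def)
  ultimately show ?case
    using assms(2) by blast
next
  case (step k l m)
  then have "x_elem n (adj_transp m k) (adj_transp m l) =
      rho_elem n m \<otimes>\<^bsub>VB n\<^esub> x_elem n k l \<otimes>\<^bsub>VB n\<^esub> inv\<^bsub>VB n\<^esub> (rho_elem n m)"
    by (simp add: conj_rho_x_elem[symmetric] conj_rho_eq_conj x_elem_in_carrier)
  then show ?case
    using step normal.inv_op_closed2[OF assms(1)] by simp
qed

lemma H_eq_generate: "H n = generate (VB n) {x_elem n k l | k l. (k, l) \<in> x_gens n}"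
proof
  interpret group "VB n"
    by (rule group_VB)
  let ?X = "{x_elem n k l | k l. (k, l) \<in> x_gens n}"
  let ?Sigs = "{vb_elem n (g (Sig i)) | i. 1 \<le> i \<and> i \<le> n - 1}"
  have "?Sigs \<subseteq> generate (VB n) ?X"
  proof
    fix x
    assume "x \<in> ?Sigs"
    then obtain i where "x = vb_elem n (g (Sig i))" "1 \<le> i" "i \<le> n - 1"
      by blast
    then have "x = x_elem n i (Suc i)" "(i, Suc i) \<in> x_gens n"
      by (auto simp: x_elem_Suc_right x_gens_def)
    then show "x \<in> generate (VB n) ?X"
      by (blast intro: generate.incl)
  qed
  then show "H n \<subseteq> generate (VB n) ?X"
    using generate_x_elem_normal unfolding H_def normal_closure_def by blast
  have "carrier (VB n) \<lhd> VB n"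
    by (rule normal_invI[OF subgroup_self]) simp
  moreover have "?Sigs \<subseteq> carrier (VB n)"
    by (auto simp: vb_elem_in_carrier)
  ultimately have "subgroup (H n) (VB n)"
    unfolding H_def normal_closure_def by (intro subgroups_Inter) (auto intro: normal_imp_subgroup)
  moreover have "?X \<subseteq> H n"
    using x_elem_in_normal unfolding H_def normal_closure_def by blast
  ultimately show "generate (VB n) ?X \<subseteq> H n"
    by (intro generate_subgroup_incl)
qed

theorem proposition6p2:
  fixes n :: nat
  assumes "2 \<le> n"
  shows "H n = generate (VB n) {x_elem n k l | k l. (k, l) \<in> x_gens n}
    \<and> (\<exists>\<phi>. \<phi> \<in> iso (P n) ((VB n)\<lparr>carrier := H n\<rparr>)
          \<and> (\<forall>(k, l) \<in> x_gens n. \<phi> (gen_elem (x_gens n) (x_rels n) (k, l)) = x_elem n k l))"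
proof -
  have "P_to_VB n ` carrier (P n) = H n"
    by (simp add: P_to_VB_image H_eq_generate)
  then have "P_to_VB n \<in> iso (P n) ((VB n)\<lparr>carrier := H n\<rparr>)"
    using P_to_VB_hom inj_on_P_to_VB by (auto simp: iso_def hom_def bij_betw_def)
  then show ?thesis
    using H_eq_generate P_to_VB_xgen by blast
qed

end
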